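(* In the regression problem (R), under condition $(Rk)$, there is a constant $C$ such that for all $n$ and $1\le N\le[n/3]$, $$|\Psi_2(N)|_k\le C\,k\,\mu_{2k}^{1/k}\sqrt N/n.$$
   Context: Trigonometric system on $[0,1]$: $\varphi_1\equiv1$, $\varphi_{2l}(x)=\sqrt2\cos(2\pi lx)$, $\varphi_{2l+1}(x)=\sqrt2\sin(2\pi lx)$, $l\ge1$. Dirichlet kernel $D_N(x,y)=\sum_{j=1}^N\varphi_j(x)\varphi_j(y)$. Problem (R): $x_i=i/n$, $\xi_i$ i.i.d. centered measurement errors. $a_{i,j}(n,N)=D_{2N}(x_i,x_j)-D_N(x_i,x_j)$ and $\Psi_2(N)=n^{-2}\sum_{i,j=1}^na_{i,j}(n,N)(\xi_i\xi_j-\mathbf E\xi_i\xi_j)$. $|\eta|_m=(\mathbf E|\eta|^m)^{1/m}$. Condition $(Rk)$: $\mu_{2k}=\mathbf E\xi_1^{2k}<\infty$ for the integer $k\ge2$ in question. *)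

theory Defs
  imports "HOL-Probability.Probability"
begin

definition trig_phi :: "nat \<Rightarrow> real \<Rightarrow> real" where
  "trig_phi j x =
     (if j = 1 then 1
      else if even j then sqrt 2 * cos (2 * pi * real (j div 2) * x)
      else sqrt 2 * sin (2 * pi * real (j div 2) * x))"

definition dirichlet_kernel :: "nat \<Rightarrow> real \<Rightarrow> real \<Rightarrow> real" where
  "dirichlet_kernel N x y = (\<Sum>j=1..N. trig_phi j x * trig_phi j y)"

definition coef_a :: "nat \<Rightarrow> nat \<Rightarrow> nat \<Rightarrow> nat \<Rightarrow> real" where
  "coef_a n N i j =
     dirichlet_kernel (2 * N) (real i / real n) (real j / real n)
     - dirichlet_kernel N (real i / real n) (real j / real n)"

definition Psi2 :: "'a measure \<Rightarrow> (nat \<Rightarrow> 'a \<Rightarrow> real) \<Rightarrow> nat \<Rightarrow> nat \<Rightarrow> 'a \<Rightarrow> real" where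
  "Psi2 M \<xi> n N \<omega> =
     (1 / (real n)\<^sup>2) * (\<Sum>i=1..n. \<Sum>j=1..n. coef_a n N i j *
        (\<xi> i \<omega> * \<xi> j \<omega> - (\<integral>\<omega>'. \<xi> i \<omega>' * \<xi> j \<omega>' \<partial>M)))"

definition Lnorm :: "'a measure \<Rightarrow> nat \<Rightarrow> ('a \<Rightarrow> real) \<Rightarrow> real" where
  "Lnorm M m \<eta> = (\<integral>\<omega>. \<bar>\<eta> \<omega>\<bar> ^ m \<partial>M) powr (1 / real m)"

end

(*
  Write Q = (SUM i j. a i j * (xi i * xi j - E (xi i * xi j))) with a symmetric. Ordering the
  terms by their larger index gives Q = (SUM i. D i), where
  D i = a i i * (xi i ^ 2 - sigma^2) + 2 * xi i * (SUM j < i. a i j * xi j)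
  is a martingale difference sequence for the filtration generated by xi 1, xi 2, ...
  For such sequences a second-order Taylor bound for |x + y| ^ k, combined with the Hoelder and
  Minkowski inequalities, gives inductively |SUM i. D i|_k ^ 2 <= 6 k (SUM i. |D i|_k ^ 2).
  Applied once more to the inner linear sums this yields
  |D i|_k ^ 2 <= 48 k mu_2k ^ (2 / k) (SUM j. a i j ^ 2), so
  |Q|_k ^ 2 <= 288 k ^ 2 mu_2k ^ (2 / k) (SUM i j. a i j ^ 2).
  Finally a i j = (SUM l in {N + 1..2 N}. phi l (i / n) * phi l (j / n)), and since all
  frequencies involved stay below n when N <= n / 3, the trigonometric system is orthogonal on
  the grid i / n; hence (SUM i j. a i j ^ 2) = N n ^ 2 and the claim holds with C = 17.
*)

theory Submission
  imports Defs
begin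

section \<open>Hoelder and Minkowski inequalities\<close>

lemma power_powr_divide:
  fixes t :: real
  assumes "0 \<le> t" "0 < k"
  shows "(t ^ k) powr (real j / real k) = t powr real j"
proof (cases "t = 0")
  case False
  then have "t > 0" using assms by simp
  then show ?thesis using assms by (simp add: powr_realpow[symmetric] powr_powr)
qed (use assms in simp)

lemma power_powr_inverse: "0 \<le> t \<Longrightarrow> 0 < k \<Longrightarrow> ((t::real) ^ k) powr (1 / real k) = t"
  using power_powr_divide[of t k 1] by simp

lemma powr_inverse_power: "0 \<le> m \<Longrightarrow> 0 < k \<Longrightarrow> ((m::real) powr (1 / real k)) ^ k = m"
  by (simp add: powr_realpow'[symmetric] powr_powr)

lemma powr_divide_le_power:
  fixes m :: real
  assumes "0 \<le> m" "0 < k"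
  shows "m powr (real j / real k) \<le> (m powr (1 / real k)) ^ j"
proof (cases "m = 0 \<or> j = 0")
  case False
  then show ?thesis using assms by (simp add: powr_realpow'[symmetric] powr_powr)
qed auto

lemma powr_inverse_le_of_le_mult_powr:
  fixes m c :: real
  assumes "0 \<le> m" "0 \<le> c" "0 < k" and le: "m \<le> c * m powr (real (k - 1) / real k)"
  shows "m powr (1 / real k) \<le> c"
proof (cases "m = 0")
  case False
  with assms have "0 < m" by simp
  have "1 / real k + real (k - 1) / real k = 1" using assms by (simp add: field_simps of_nat_diff)
  then have "m powr (1 / real k) * m powr (real (k - 1) / real k) \<le> c * m powr (real (k - 1) / real k)"
    using le \<open>0 < m\<close> by (simp add: powr_add[symmetric])
  then show ?thesis using \<open>0 < m\<close> by (simp add: mult_le_cancel_right)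
qed (use assms in simp)

lemma Young_powr:
  fixes a b \<alpha> \<beta> :: real
  assumes "0 \<le> a" "0 \<le> b" "0 \<le> \<alpha>" "0 \<le> \<beta>" "\<alpha> + \<beta> = 1"
  shows "a powr \<alpha> * b powr \<beta> \<le> \<alpha> * a + \<beta> * b"
proof (cases "a = 0 \<or> b = 0")
  case False then show ?thesis using Youngs_inequality_0[of \<alpha> \<beta> a b] assms by auto
qed (use assms in auto)

lemma Young_powr_scaled:
  fixes a b A B \<alpha> \<beta> :: real
  assumes "0 \<le> a" "0 \<le> b" "0 < A" "0 < B" "0 \<le> \<alpha>" "0 \<le> \<beta>" "\<alpha> + \<beta> = 1"
  shows "a powr \<alpha> * b powr \<beta> \<le> A powr \<alpha> * B powr \<beta> * (\<alpha> * (a / A) + \<beta> * (b / B))"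
proof -
  have "a powr \<alpha> * b powr \<beta> = A powr \<alpha> * B powr \<beta> * ((a / A) powr \<alpha> * (b / B) powr \<beta>)"
    using assms by (simp add: powr_divide field_simps)
  also have "\<dots> \<le> A powr \<alpha> * B powr \<beta> * (\<alpha> * (a / A) + \<beta> * (b / B))"
    using Young_powr[of "a / A" "b / B" \<alpha> \<beta>] assms by (intro mult_left_mono) auto
  finally show ?thesis .
qed

lemma integrable_powr_mult_powr:
  fixes f g :: "'a \<Rightarrow> real"
  assumes f: "integrable M f" and g: "integrable M g"
    and f_nonneg: "\<And>\<omega>. \<omega> \<in> space M \<Longrightarrow> 0 \<le> f \<omega>" and g_nonneg: "\<And>\<omega>. \<omega> \<in> space M \<Longrightarrow> 0 \<le> g \<omega>"
    and "0 \<le> \<alpha>" "0 \<le> \<beta>" "\<alpha> + \<beta> = 1"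
  shows "integrable M (\<lambda>\<omega>. f \<omega> powr \<alpha> * g \<omega> powr \<beta>)"
proof (rule Bochner_Integration.integrable_bound[of _ "\<lambda>\<omega>. \<alpha> * f \<omega> + \<beta> * g \<omega>"])
  show "integrable M (\<lambda>\<omega>. \<alpha> * f \<omega> + \<beta> * g \<omega>)" using f g by auto
  show "(\<lambda>\<omega>. f \<omega> powr \<alpha> * g \<omega> powr \<beta>) \<in> borel_measurable M" using f g by measurable
  show "AE \<omega> in M. norm (f \<omega> powr \<alpha> * g \<omega> powr \<beta>) \<le> norm (\<alpha> * f \<omega> + \<beta> * g \<omega>)"
    using Young_powr f_nonneg g_nonneg assms(5-7)
    by (intro AE_I2) (auto simp: abs_mult intro!: order_trans[OF _ abs_ge_self])
qed

lemma Hoelder_integral: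
  fixes f g :: "'a \<Rightarrow> real"
  assumes f: "integrable M f" and g: "integrable M g"
    and f_nonneg: "\<And>\<omega>. \<omega> \<in> space M \<Longrightarrow> 0 \<le> f \<omega>" and g_nonneg: "\<And>\<omega>. \<omega> \<in> space M \<Longrightarrow> 0 \<le> g \<omega>"
    and \<alpha>\<beta>: "0 \<le> \<alpha>" "0 \<le> \<beta>" "\<alpha> + \<beta> = 1"
  shows "(\<integral>\<omega>. f \<omega> powr \<alpha> * g \<omega> powr \<beta> \<partial>M) \<le> (\<integral>\<omega>. f \<omega> \<partial>M) powr \<alpha> * (\<integral>\<omega>. g \<omega> \<partial>M) powr \<beta>"
proof -
  define A where "A = (\<integral>\<omega>. f \<omega> \<partial>M)"
  define B where "B = (\<integral>\<omega>. g \<omega> \<partial>M)"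
  have int: "integrable M (\<lambda>\<omega>. f \<omega> powr \<alpha> * g \<omega> powr \<beta>)"
    by (rule integrable_powr_mult_powr) (use assms in auto)
  show ?thesis
  proof (cases "A = 0 \<or> B = 0")
    case True
    then have "AE \<omega> in M. f \<omega> = 0 \<or> g \<omega> = 0"
      using integral_nonneg_eq_0_iff_AE[OF f] integral_nonneg_eq_0_iff_AE[OF g] f_nonneg g_nonneg
      unfolding A_def B_def by (auto intro: AE_I2 elim: AE_mp)
    then have "AE \<omega> in M. f \<omega> powr \<alpha> * g \<omega> powr \<beta> = 0" by eventually_elim auto
    then have "(\<integral>\<omega>. f \<omega> powr \<alpha> * g \<omega> powr \<beta> \<partial>M) = 0"
      using integral_cong_AE[of "\<lambda>\<omega>. f \<omega> powr \<alpha> * g \<omega> powr \<beta>" M "\<lambda>_. 0"] int by auto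
    then show ?thesis by simp
  next
    case False
    have "A \<ge> 0" "B \<ge> 0" unfolding A_def B_def using f_nonneg g_nonneg by (auto intro!: integral_nonneg_AE)
    with False have A: "A > 0" and B: "B > 0" by auto
    have pointwise: "f \<omega> powr \<alpha> * g \<omega> powr \<beta> \<le> A powr \<alpha> * B powr \<beta> * (\<alpha> * (f \<omega> / A) + \<beta> * (g \<omega> / B))"
      if "\<omega> \<in> space M" for \<omega>
      using Young_powr_scaled[OF f_nonneg[OF that] g_nonneg[OF that] A B \<alpha>\<beta>] .
    have "(\<integral>\<omega>. f \<omega> powr \<alpha> * g \<omega> powr \<beta> \<partial>M)
        \<le> (\<integral>\<omega>. A powr \<alpha> * B powr \<beta> * (\<alpha> * (f \<omega> / A) + \<beta> * (g \<omega> / B)) \<partial>M)"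
      using pointwise f g by (intro integral_mono int) auto
    also have "\<dots> = A powr \<alpha> * B powr \<beta> * (\<alpha> * (A / A) + \<beta> * (B / B))"
      using f g by (simp add: A_def B_def)
    also have "\<dots> = A powr \<alpha> * B powr \<beta>" using A B \<alpha>\<beta> by simp
    finally show ?thesis by (simp add: A_def B_def)
  qed
qed

definition finite_moment :: "'a measure \<Rightarrow> nat \<Rightarrow> ('a \<Rightarrow> real) \<Rightarrow> bool" where
  "finite_moment M k X \<longleftrightarrow> X \<in> borel_measurable M \<and> integrable M (\<lambda>\<omega>. \<bar>X \<omega>\<bar> ^ k)"

lemma finite_moment_integrable: "finite_moment M k X \<Longrightarrow> integrable M (\<lambda>\<omega>. \<bar>X \<omega>\<bar> ^ k)"
  by (simp add: finite_moment_def)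

lemma Lnorm_nonneg: "0 \<le> Lnorm M k X"
  by (simp add: Lnorm_def)

lemma Lnorm_power: "0 < k \<Longrightarrow> Lnorm M k X ^ k = (\<integral>\<omega>. \<bar>X \<omega>\<bar> ^ k \<partial>M)"
  unfolding Lnorm_def by (rule powr_inverse_power) (auto intro!: integral_nonneg_AE)

lemma Lnorm_abs: "Lnorm M k (\<lambda>\<omega>. \<bar>X \<omega>\<bar>) = Lnorm M k X"
  by (simp add: Lnorm_def)

lemma Lnorm_cmult: "0 < k \<Longrightarrow> Lnorm M k (\<lambda>\<omega>. c * X \<omega>) = \<bar>c\<bar> * Lnorm M k X"
  by (simp add: Lnorm_def abs_mult power_mult_distrib powr_mult integral_nonneg_AE power_powr_inverse)

lemma power_minus_two_mult:
  fixes x :: "'a :: comm_monoid_mult"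
  assumes "2 \<le> k" shows "x ^ (k - 2) * x * x = x ^ k"
proof -
  obtain j where "k = Suc (Suc j)" using assms by (metis add_2_eq_Suc le_Suc_ex)
  then show ?thesis by (simp add: mult_ac)
qed

lemma abs_add_power_le: "\<bar>x + y\<bar> ^ k \<le> 2 ^ k * (\<bar>x\<bar> ^ k + \<bar>y\<bar> ^ k)" for x y :: real
proof -
  have "\<bar>x + y\<bar> ^ k \<le> (2 * max \<bar>x\<bar> \<bar>y\<bar>) ^ k" by (intro power_mono) auto
  also have "\<dots> \<le> 2 ^ k * (\<bar>x\<bar> ^ k + \<bar>y\<bar> ^ k)" by (simp add: power_mult_distrib max_def)
  finally show ?thesis .
qed

lemma finite_moment_add:
  assumes "finite_moment M k X" "finite_moment M k Y"
  shows "finite_moment M k (\<lambda>\<omega>. X \<omega> + Y \<omega>)"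
proof -
  have [measurable]: "X \<in> borel_measurable M" "Y \<in> borel_measurable M"
    using assms by (auto simp: finite_moment_def)
  have "integrable M (\<lambda>\<omega>. \<bar>X \<omega> + Y \<omega>\<bar> ^ k)"
  proof (rule Bochner_Integration.integrable_bound[of _ "\<lambda>\<omega>. 2 ^ k * (\<bar>X \<omega>\<bar> ^ k + \<bar>Y \<omega>\<bar> ^ k)"])
    show "integrable M (\<lambda>\<omega>. 2 ^ k * (\<bar>X \<omega>\<bar> ^ k + \<bar>Y \<omega>\<bar> ^ k))"
      using assms by (auto simp: finite_moment_def)
    show "AE \<omega> in M. norm (\<bar>X \<omega> + Y \<omega>\<bar> ^ k) \<le> norm (2 ^ k * (\<bar>X \<omega>\<bar> ^ k + \<bar>Y \<omega>\<bar> ^ k))"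
      by (intro AE_I2) (auto intro!: order_trans[OF abs_add_power_le])
  qed measurable
  then show ?thesis by (simp add: finite_moment_def)
qed

lemma finite_moment_cmult: "finite_moment M k X \<Longrightarrow> finite_moment M k (\<lambda>\<omega>. c * X \<omega>)"
  by (auto simp: finite_moment_def abs_mult power_mult_distrib)

lemma finite_moment_abs: "finite_moment M k X \<Longrightarrow> finite_moment M k (\<lambda>\<omega>. \<bar>X \<omega>\<bar>)"
  by (auto simp: finite_moment_def)

lemma integral_abs_mult_power_le:
  assumes k: "2 \<le> k" and Z: "finite_moment M k Z" and W: "finite_moment M k W"
  shows "integrable M (\<lambda>\<omega>. \<bar>Z \<omega>\<bar> * \<bar>W \<omega>\<bar> ^ (k - 1))"
    and "(\<integral>\<omega>. \<bar>Z \<omega>\<bar> * \<bar>W \<omega>\<bar> ^ (k - 1) \<partial>M)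
           \<le> Lnorm M k Z * (\<integral>\<omega>. \<bar>W \<omega>\<bar> ^ k \<partial>M) powr (real (k - 1) / real k)"
proof -
  have exps: "1 / real k + real (k - 1) / real k = 1" "0 \<le> 1 / real k" "0 \<le> real (k - 1) / real k"
    using k by (auto simp: field_simps of_nat_diff)
  have eq: "\<bar>Z \<omega>\<bar> * \<bar>W \<omega>\<bar> ^ (k - 1) =
      (\<bar>Z \<omega>\<bar> ^ k) powr (1 / real k) * (\<bar>W \<omega>\<bar> ^ k) powr (real (k - 1) / real k)" for \<omega>
    using k power_powr_divide[of "\<bar>W \<omega>\<bar>" k "k - 1"] powr_realpow'[of "\<bar>W \<omega>\<bar>" "k - 1"]
    by (simp add: power_powr_inverse)
  show "integrable M (\<lambda>\<omega>. \<bar>Z \<omega>\<bar> * \<bar>W \<omega>\<bar> ^ (k - 1))"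
    unfolding eq using Z W exps by (intro integrable_powr_mult_powr) (auto simp: finite_moment_def)
  show "(\<integral>\<omega>. \<bar>Z \<omega>\<bar> * \<bar>W \<omega>\<bar> ^ (k - 1) \<partial>M)
      \<le> Lnorm M k Z * (\<integral>\<omega>. \<bar>W \<omega>\<bar> ^ k \<partial>M) powr (real (k - 1) / real k)"
    unfolding eq Lnorm_def using Z W exps by (intro Hoelder_integral) (auto simp: finite_moment_def)
qed

lemma Minkowski_Lnorm:
  assumes k: "1 \<le> k" and X: "finite_moment M k X" and Y: "finite_moment M k Y"
  shows "Lnorm M k (\<lambda>\<omega>. X \<omega> + Y \<omega>) \<le> Lnorm M k X + Lnorm M k Y"
proof (cases "k = 1")
  case True
  have "(\<integral>\<omega>. \<bar>X \<omega> + Y \<omega>\<bar> \<partial>M) \<le> (\<integral>\<omega>. \<bar>X \<omega>\<bar> + \<bar>Y \<omega>\<bar> \<partial>M)"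
    using X Y finite_moment_add[OF X Y] True
    by (intro integral_mono) (auto simp: finite_moment_def abs_triangle_ineq)
  then show ?thesis
    using X Y True by (simp add: Lnorm_def finite_moment_def integral_nonneg_AE)
next
  case False
  with k have k: "2 \<le> k" by simp
  define m where "m = (\<integral>\<omega>. \<bar>X \<omega> + Y \<omega>\<bar> ^ k \<partial>M)"
  have m_nonneg: "m \<ge> 0" unfolding m_def by (auto intro!: integral_nonneg_AE)
  have XY: "finite_moment M k (\<lambda>\<omega>. X \<omega> + Y \<omega>)" by (rule finite_moment_add[OF X Y])
  note Hoelder = integral_abs_mult_power_le[OF k _ XY]
  have "\<bar>X \<omega> + Y \<omega>\<bar> ^ k \<le> \<bar>X \<omega>\<bar> * \<bar>X \<omega> + Y \<omega>\<bar> ^ (k - 1) + \<bar>Y \<omega>\<bar> * \<bar>X \<omega> + Y \<omega>\<bar> ^ (k - 1)" for \<omega>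
  proof -
    have "\<bar>X \<omega> + Y \<omega>\<bar> ^ k = \<bar>X \<omega> + Y \<omega>\<bar> * \<bar>X \<omega> + Y \<omega>\<bar> ^ (k - 1)"
      using k by (simp add: power_eq_if)
    also have "\<dots> \<le> (\<bar>X \<omega>\<bar> + \<bar>Y \<omega>\<bar>) * \<bar>X \<omega> + Y \<omega>\<bar> ^ (k - 1)"
      by (intro mult_right_mono) auto
    finally show ?thesis by (simp add: distrib_right)
  qed
  then have "m \<le> (\<integral>\<omega>. \<bar>X \<omega>\<bar> * \<bar>X \<omega> + Y \<omega>\<bar> ^ (k - 1) + \<bar>Y \<omega>\<bar> * \<bar>X \<omega> + Y \<omega>\<bar> ^ (k - 1) \<partial>M)"
    unfolding m_def using Hoelder(1)[OF X] Hoelder(1)[OF Y] finite_moment_integrable[OF XY]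
    by (intro integral_mono) auto
  also have "\<dots> \<le> (Lnorm M k X + Lnorm M k Y) * m powr (real (k - 1) / real k)"
    using Hoelder[OF X] Hoelder[OF Y] by (simp add: distrib_right m_def)
  finally have "m \<le> (Lnorm M k X + Lnorm M k Y) * m powr (real (k - 1) / real k)" .
  then have "m powr (1 / real k) \<le> Lnorm M k X + Lnorm M k Y"
    using k m_nonneg by (intro powr_inverse_le_of_le_mult_powr) (auto simp: Lnorm_nonneg)
  then show ?thesis by (simp add: Lnorm_def m_def)
qed

lemma integrable_abs_power_mult:
  assumes k: "2 \<le> k" and X: "finite_moment M k X" and Y: "finite_moment M k Y"
  shows "integrable M (\<lambda>\<omega>. \<bar>X \<omega>\<bar> ^ (k - 2) * X \<omega> * Y \<omega>)"
proof (rule Bochner_Integration.integrable_bound)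
  show "integrable M (\<lambda>\<omega>. \<bar>\<bar>X \<omega>\<bar> + \<bar>Y \<omega>\<bar>\<bar> ^ k)"
    using finite_moment_add[OF finite_moment_abs[OF X] finite_moment_abs[OF Y]]
    by (simp add: finite_moment_def)
  show "AE \<omega> in M. norm (\<bar>X \<omega>\<bar> ^ (k - 2) * X \<omega> * Y \<omega>) \<le> norm (\<bar>\<bar>X \<omega>\<bar> + \<bar>Y \<omega>\<bar>\<bar> ^ k)"
  proof (intro AE_I2)
    fix \<omega>
    have "norm (\<bar>X \<omega>\<bar> ^ (k - 2) * X \<omega> * Y \<omega>) = \<bar>X \<omega>\<bar> ^ (k - 2) * \<bar>X \<omega>\<bar> * \<bar>Y \<omega>\<bar>"
      by (simp add: abs_mult)
    also have "\<dots> \<le> (\<bar>X \<omega>\<bar> + \<bar>Y \<omega>\<bar>) ^ (k - 2) * (\<bar>X \<omega>\<bar> + \<bar>Y \<omega>\<bar>) * (\<bar>X \<omega>\<bar> + \<bar>Y \<omega>\<bar>)"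
      by (intro mult_mono power_mono) auto
    also have "\<dots> = (\<bar>X \<omega>\<bar> + \<bar>Y \<omega>\<bar>) ^ k"
      using k by (rule power_minus_two_mult)
    finally show "norm (\<bar>X \<omega>\<bar> ^ (k - 2) * X \<omega> * Y \<omega>) \<le> norm (\<bar>\<bar>X \<omega>\<bar> + \<bar>Y \<omega>\<bar>\<bar> ^ k)" by simp
  qed
qed (use X Y in \<open>auto simp: finite_moment_def\<close>)

lemma finite_moment_zero: "0 < k \<Longrightarrow> finite_moment M k (\<lambda>_. 0)"
  by (simp add: finite_moment_def zero_power)

lemma finite_moment_sum:
  assumes "0 < k" "finite A" "\<And>x. x \<in> A \<Longrightarrow> finite_moment M k (X x)"
  shows "finite_moment M k (\<lambda>\<omega>. \<Sum>x\<in>A. X x \<omega>)"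
  using assms(2,3)
  by (induction A rule: finite_induct) (auto intro: finite_moment_zero[OF assms(1)] finite_moment_add)

context prob_space
begin

lemma finite_moment_const: "finite_moment M k (\<lambda>_. c)"
  by (simp add: finite_moment_def)

lemma Lnorm_const: "0 < k \<Longrightarrow> Lnorm M k (\<lambda>_. c) = \<bar>c\<bar>"
  by (simp add: Lnorm_def prob_space power_powr_inverse)

lemma Lnorm_mono:
  assumes j: "0 < j" "j \<le> k" and X: "finite_moment M k X"
  shows "Lnorm M j X \<le> Lnorm M k X"
proof -
  have X_int: "integrable M (\<lambda>\<omega>. \<bar>X \<omega>\<bar> ^ k)" using X by (simp add: finite_moment_def)
  have exps: "real j / real k + real (k - j) / real k = 1" "0 \<le> real j / real k" "0 \<le> real (k - j) / real k"
    using j by (auto simp: field_simps of_nat_diff)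
  have "(\<integral>\<omega>. \<bar>X \<omega>\<bar> ^ j \<partial>M) = (\<integral>\<omega>. (\<bar>X \<omega>\<bar> ^ k) powr (real j / real k) * 1 powr (real (k - j) / real k) \<partial>M)"
    using j by (simp add: power_powr_divide powr_realpow')
  also have "\<dots> \<le> (\<integral>\<omega>. \<bar>X \<omega>\<bar> ^ k \<partial>M) powr (real j / real k) * (\<integral>\<omega>. 1 \<partial>M) powr (real (k - j) / real k)"
    using X_int exps by (intro Hoelder_integral) auto
  finally have "(\<integral>\<omega>. \<bar>X \<omega>\<bar> ^ j \<partial>M) \<le> (\<integral>\<omega>. \<bar>X \<omega>\<bar> ^ k \<partial>M) powr (real j / real k)"
    by (simp add: prob_space)
  then have "(\<integral>\<omega>. \<bar>X \<omega>\<bar> ^ j \<partial>M) powr (1 / real j) \<le> ((\<integral>\<omega>. \<bar>X \<omega>\<bar> ^ k \<partial>M) powr (real j / real k)) powr (1 / real j)"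
    by (intro powr_mono2) (auto intro!: integral_nonneg_AE)
  also have "\<dots> = Lnorm M k X"
    using j by (simp add: Lnorm_def powr_powr)
  finally show ?thesis by (simp add: Lnorm_def)
qed

end

section \<open>A second-order bound for \<open>\<bar>x + y\<bar> ^ k\<close>\<close>

lemma binomial_add_two_le:
  "2 * ((m + 2) choose (i + 2)) \<le> (m + 2) * (m + 1) * (m choose i)"
proof -
  have "Suc (Suc i) * Suc i * (Suc (Suc m) choose Suc (Suc i)) = Suc (Suc m) * Suc m * (m choose i)"
    by (metis Suc_times_binomial mult.assoc mult.left_commute)
  moreover have "2 * (Suc (Suc m) choose Suc (Suc i)) \<le> Suc (Suc i) * Suc i * (Suc (Suc m) choose Suc (Suc i))"
    by (intro mult_right_mono) auto
  ultimately show ?thesis by (simp add: numeral_2_eq_2 del: binomial_Suc_Suc)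
qed

lemma power_add_le_second_order:
  fixes x y :: real
  assumes x: "0 \<le> x"
  shows "(x + y) ^ (m + 2) \<le> x ^ (m + 2) + real (m + 2) * x ^ (m + 1) * y
           + (real (m + 2) * real (m + 1) / 2) * y\<^sup>2 * (x + \<bar>y\<bar>) ^ m"
proof -
  define f where "f j = real ((m + 2) choose j) * y ^ j * x ^ (m + 2 - j)" for j
  define c where "c = real (m + 2) * real (m + 1) / 2"
  have "(x + y) ^ (m + 2) = (\<Sum>j\<le>m + 2. f j)"
    using binomial_ring[of y x "m + 2"] by (simp add: f_def add.commute)
  also have "\<dots> = x ^ (m + 2) + real (m + 2) * x ^ (m + 1) * y + (\<Sum>i\<le>m. f (i + 2))"
    by (simp add: sum.atMost_Suc_shift numeral_2_eq_2 f_def del: sum.atMost_Suc)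
  also have "(\<Sum>i\<le>m. f (i + 2)) \<le> (\<Sum>i\<le>m. c * y\<^sup>2 * (real (m choose i) * \<bar>y\<bar> ^ i * x ^ (m - i)))"
  proof (intro sum_mono)
    fix i
    have "real (2 * ((m + 2) choose (i + 2))) \<le> real ((m + 2) * (m + 1) * (m choose i))"
      by (simp only: of_nat_le_iff) (rule binomial_add_two_le)
    then have binomial: "real ((m + 2) choose (i + 2)) \<le> c * real (m choose i)"
      by (simp del: binomial_Suc_Suc add: c_def algebra_simps)
    have "y ^ (i + 2) \<le> y\<^sup>2 * \<bar>y\<bar> ^ i"
      by (metis abs_ge_self abs_power2 add.commute power_abs power_add)
    then have "f (i + 2) \<le> real ((m + 2) choose (i + 2)) * (y\<^sup>2 * \<bar>y\<bar> ^ i) * x ^ (m - i)"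
      unfolding f_def using x by (auto intro!: mult_right_mono mult_left_mono)
    also have "\<dots> \<le> (c * real (m choose i)) * (y\<^sup>2 * \<bar>y\<bar> ^ i) * x ^ (m - i)"
      using binomial x by (intro mult_right_mono) auto
    finally show "f (i + 2) \<le> c * y\<^sup>2 * (real (m choose i) * \<bar>y\<bar> ^ i * x ^ (m - i))"
      by (simp add: ac_simps)
  qed
  also have "\<dots> = c * y\<^sup>2 * (x + \<bar>y\<bar>) ^ m"
    using binomial_ring[of "\<bar>y\<bar>" x m] by (simp add: sum_distrib_left add.commute)
  finally show ?thesis by (simp add: c_def)
qed

lemma power_add_ge_linear:
  fixes x b :: real
  assumes "0 \<le> x" "0 \<le> b"
  shows "b ^ Suc m + real (Suc m) * x * b ^ m \<le> (x + b) ^ Suc m"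
proof (induction m)
  case (Suc m)
  have "(x + b) * (b ^ Suc m + real (Suc m) * x * b ^ m)
      = b ^ Suc (Suc m) + real (Suc (Suc m)) * x * b ^ Suc m + real (Suc m) * x * x * b ^ m"
    by (simp add: algebra_simps)
  moreover have "0 \<le> real (Suc m) * x * x * b ^ m" using assms by simp
  moreover have "(x + b) * (b ^ Suc m + real (Suc m) * x * b ^ m) \<le> (x + b) ^ Suc (Suc m)"
    using Suc assms by (simp add: mult_left_mono)
  ultimately show ?case by linarith
qed simp

lemma power_le_second_order_opposite:
  fixes x b :: real
  assumes x: "0 \<le> x" and xb: "x < b" and m: "1 \<le> m"
  shows "b ^ (m + 2) + real (m + 2) * (x ^ (m + 1) * b)
           \<le> (real (m + 2) * real (m + 1) / 2) * (x + b) ^ m * b\<^sup>2"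
proof -
  define c where "c = real (m + 2) * real (m + 1) / 2"
  obtain j where j: "m = Suc j" using m by (cases m) auto
  have b: "0 \<le> b" using x xb by simp
  have c1: "1 \<le> c" unfolding c_def by (simp add: field_simps)
  have c2: "real (m + 2) \<le> c * real m"
  proof -
    have "2 * 1 \<le> real (m + 1) * real m" using m by (intro mult_mono) auto
    then have "real (m + 2) * 2 \<le> real (m + 2) * (real (m + 1) * real m)"
      by (intro mult_left_mono) auto
    then show ?thesis unfolding c_def by (simp add: field_simps)
  qed
  have "x ^ (m + 1) * b = x * x ^ m * b" by simp
  also have "\<dots> \<le> x * b ^ m * b" using x xb by (intro mult_right_mono mult_left_mono power_mono) auto
  finally have xpow: "x ^ (m + 1) * b \<le> x * b ^ (m + 1)" by (simp add: ac_simps)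
  have t1: "b ^ (m + 2) \<le> c * b ^ (m + 2)"
    using mult_right_mono[OF c1, of "b ^ (m + 2)"] b by simp
  have t2: "real (m + 2) * (x ^ (m + 1) * b) \<le> c * real m * (x * b ^ (m + 1))"
    by (rule order_trans[OF mult_left_mono[OF xpow] mult_right_mono[OF c2]]) (use x b in auto)
  have "c * b ^ (m + 2) + c * real m * (x * b ^ (m + 1)) = c * (b ^ m + real m * x * b ^ j) * b\<^sup>2"
    unfolding j by (simp add: algebra_simps power2_eq_square)
  also have "\<dots> \<le> c * (x + b) ^ m * b\<^sup>2"
    using power_add_ge_linear[OF x b, of j] j c1 by (intro mult_right_mono mult_left_mono) auto
  finally have "c * b ^ (m + 2) + c * real m * (x * b ^ (m + 1)) \<le> c * (x + b) ^ m * b\<^sup>2" .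
  with t1 t2 show ?thesis unfolding c_def[symmetric] by linarith
qed

lemma abs_add_power_le_second_order_nonneg:
  fixes x y :: real
  assumes x: "0 \<le> x" and k: "2 \<le> k"
  shows "\<bar>x + y\<bar> ^ k \<le> \<bar>x\<bar> ^ k + real k * (\<bar>x\<bar> ^ (k - 2) * x * y)
           + (real k * (real k - 1) / 2) * (\<bar>x\<bar> + \<bar>y\<bar>) ^ (k - 2) * y\<^sup>2"
proof -
  obtain m where m: "k = m + 2" using k by (metis add.commute le_Suc_ex)
  define c where "c = real (m + 2) * real (m + 1) / 2"
  have rhs: "\<bar>x\<bar> ^ k + real k * (\<bar>x\<bar> ^ (k - 2) * x * y)
           + (real k * (real k - 1) / 2) * (\<bar>x\<bar> + \<bar>y\<bar>) ^ (k - 2) * y\<^sup>2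
      = x ^ (m + 2) + real (m + 2) * x ^ (m + 1) * y + c * y\<^sup>2 * (x + \<bar>y\<bar>) ^ m"
    using x m by (simp add: c_def algebra_simps)
  show ?thesis
  proof (cases "even k \<or> x + y \<ge> 0")
    case True
    then have "\<bar>x + y\<bar> ^ k = (x + y) ^ (m + 2)" unfolding m by (metis abs_of_nonneg power_even_abs)
    then show ?thesis unfolding rhs using power_add_le_second_order[OF x, of y m] by (simp add: c_def)
  next
    case False
    \<comment> \<open>then \<open>k\<close> is odd and \<open>\<bar>x + y\<bar> \<le> - y\<close>, so the previous lemma applies with \<open>b = - y\<close>\<close>
    then have "1 \<le> m" "x < - y" using m by (auto dest: odd_pos)
    have "\<bar>x + y\<bar> ^ k \<le> (- y) ^ (m + 2)"
      unfolding m using False x by (intro power_mono) auto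
    moreover have "(- y) ^ (m + 2) - real (m + 2) * x ^ (m + 1) * y \<le> c * (x + \<bar>y\<bar>) ^ m * y\<^sup>2"
      using power_le_second_order_opposite[OF x \<open>x < - y\<close> \<open>1 \<le> m\<close>] \<open>x < - y\<close> x
      by (simp add: c_def abs_of_neg)
    moreover have "0 \<le> x ^ (m + 2)" using x by simp
    ultimately show ?thesis unfolding rhs by (simp add: ac_simps)
  qed
qed

lemma abs_add_power_le_second_order:
  fixes x y :: real
  assumes k: "2 \<le> k"
  shows "\<bar>x + y\<bar> ^ k \<le> \<bar>x\<bar> ^ k + real k * (\<bar>x\<bar> ^ (k - 2) * x * y)
           + (real k * (real k - 1) / 2) * (\<bar>x\<bar> + \<bar>y\<bar>) ^ (k - 2) * y\<^sup>2"
proof (cases "0 \<le> x")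
  case False
  from abs_add_power_le_second_order_nonneg[of "- x" k "- y"] False k show ?thesis
    by (simp add: abs_minus_commute) (metis abs_minus add.commute minus_add_distrib)
qed (use abs_add_power_le_second_order_nonneg k in auto)

section \<open>A moment inequality for sums of martingale differences\<close>

lemma one_add_power_le_three:
  fixes t :: real
  assumes "0 \<le> t" "real j * t \<le> 1"
  shows "(1 + t) ^ j \<le> 3"
proof -
  have "(1 + t) ^ j \<le> exp t ^ j" using assms by (intro power_mono) auto
  also have "\<dots> = exp (real j * t)" by (simp add: exp_of_nat_mult)
  also have "\<dots> \<le> exp 1" using assms by simp
  also have "\<dots> \<le> 3" by (rule exp_le)
  finally show ?thesis .
qed

lemma square_le_of_power_le_mult_one_add:
  fixes a s u :: real
  assumes k: "0 < k" and a: "0 \<le> a" and u: "0 \<le> u" "u \<le> 2" and le: "a ^ k \<le> s ^ k * (1 + u)"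
  shows "a\<^sup>2 \<le> s\<^sup>2 * (1 + 4 * u / real k)"
proof -
  define v where "v = 4 * u / real k"
  have v: "0 \<le> v" "real k * v = 4 * u" using k u by (simp_all add: v_def)
  have "(a\<^sup>2) ^ k \<le> (s\<^sup>2) ^ k * (1 + u)\<^sup>2"
    using power_mono[OF le, of 2] a by (simp add: power_mult_distrib power_mult[symmetric] mult.commute)
  moreover have "(1 + u)\<^sup>2 \<le> (1 + v) ^ k"
  proof -
    have "(1 + u)\<^sup>2 \<le> 1 + real k * v"
      using mult_right_mono[OF u(2) u(1)] v(2) by (simp add: power2_eq_square algebra_simps)
    also have "\<dots> \<le> (1 + v) ^ k"
      by (rule Bernoulli_inequality) (use v in linarith)
    finally show ?thesis .
  qed
  ultimately have "(a\<^sup>2) ^ k \<le> (s\<^sup>2 * (1 + v)) ^ k"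
    using order_trans mult_left_mono[of "(1 + u)\<^sup>2" "(1 + v) ^ k" "(s\<^sup>2) ^ k"]
    by (simp add: power_mult_distrib)
  moreover obtain j where "k = Suc j" using k by (cases k) auto
  ultimately show ?thesis
    using power_le_imp_le_base[of "a\<^sup>2" j "s\<^sup>2 * (1 + v)"] v by (simp add: v_def)
qed

lemma square_le_of_power_le_second_order:
  fixes a s d :: real
  assumes k: "2 \<le> k" and a: "0 \<le> a" and s: "0 \<le> s" and d: "0 \<le> d" and asd: "a \<le> s + d"
    and power_le: "a ^ k \<le> s ^ k + (real k * (real k - 1) / 2) * (s + d) ^ (k - 2) * d\<^sup>2"
  shows "a\<^sup>2 \<le> s\<^sup>2 + 6 * real k * d\<^sup>2"
proof (cases "s \<le> real k * d")
  case True
  have "a\<^sup>2 \<le> (s + d)\<^sup>2" using a asd by (intro power_mono) auto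
  also have "\<dots> = s\<^sup>2 + 2 * (s * d) + d\<^sup>2" by (simp add: power2_eq_square algebra_simps)
  finally have "a\<^sup>2 \<le> s\<^sup>2 + 2 * (s * d) + d\<^sup>2" .
  moreover have "s * d \<le> real k * d\<^sup>2" using mult_right_mono[OF True d] by (simp add: power2_eq_square)
  moreover have "d\<^sup>2 \<le> real k * d\<^sup>2" using k by (intro mult_right_mono[of 1 "real k", simplified]) auto
  moreover have "0 \<le> real k * d\<^sup>2" by simp
  ultimately show ?thesis by (simp only: mult.assoc)
next
  case False
  \<comment> \<open>for \<open>d < s / k\<close> the factor \<open>(s + d) ^ (k - 2)\<close> is at most \<open>3 s ^ (k - 2)\<close>\<close>
  then have "0 < s" using k d by (smt (verit) mult_nonneg_nonneg of_nat_0_le_iff)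
  define t where "t = d / s"
  have t: "0 \<le> t" "real k * t < 1" using d False \<open>0 < s\<close> by (simp_all add: t_def field_simps)
  have d_eq: "d = s * t" using \<open>0 < s\<close> by (simp add: t_def)
  define u where "u = 3 / 2 * real k ^ 2 * t\<^sup>2"
  have "(real k * t)\<^sup>2 \<le> 1" using t by (intro power_le_one) auto
  then have u: "0 \<le> u" "u \<le> 2" by (simp_all add: u_def power_mult_distrib)
  have "(s + d) ^ (k - 2) = s ^ (k - 2) * (1 + t) ^ (k - 2)"
    by (simp add: d_eq power_mult_distrib[symmetric] algebra_simps)
  also have "\<dots> \<le> s ^ (k - 2) * 3"
  proof -
    have "real (k - 2) * t \<le> real k * t" using t by (intro mult_right_mono) auto
    then show ?thesis using one_add_power_le_three[of t "k - 2"] t \<open>0 < s\<close> by (intro mult_left_mono) auto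
  qed
  finally have "(real k * (real k - 1) / 2) * (s + d) ^ (k - 2) * d\<^sup>2 \<le> (real k ^ 2 / 2) * (s ^ (k - 2) * 3) * d\<^sup>2"
    using k \<open>0 < s\<close> d by (intro mult_right_mono mult_mono) (auto simp: power2_eq_square algebra_simps)
  also have "\<dots> = s ^ k * u"
    using power_minus_two_mult[OF k, of s] by (simp add: u_def d_eq power2_eq_square algebra_simps)
  finally have "(real k * (real k - 1) / 2) * (s + d) ^ (k - 2) * d\<^sup>2 \<le> s ^ k * u" .
  with power_le have "a ^ k \<le> s ^ k * (1 + u)" unfolding distrib_left mult_1_right by linarith
  then have "a\<^sup>2 \<le> s\<^sup>2 * (1 + 4 * u / real k)"
    using k a u by (intro square_le_of_power_le_mult_one_add) auto
  also have "\<dots> = s\<^sup>2 + 6 * real k * d\<^sup>2"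
    using k by (simp add: u_def d_eq power2_eq_square field_simps)
  finally show ?thesis .
qed

lemma integral_power_mult_square_le:
  assumes k: "2 \<le> k" and A: "finite_moment M k A" and D: "finite_moment M k D"
    and D_le: "\<And>\<omega>. \<bar>D \<omega>\<bar> \<le> A \<omega>"
  shows "integrable M (\<lambda>\<omega>. A \<omega> ^ (k - 2) * (D \<omega>)\<^sup>2)"
    and "(\<integral>\<omega>. A \<omega> ^ (k - 2) * (D \<omega>)\<^sup>2 \<partial>M) \<le> Lnorm M k A ^ (k - 2) * (Lnorm M k D)\<^sup>2"
proof -
  have [measurable]: "A \<in> borel_measurable M" "D \<in> borel_measurable M"
    using A D by (simp_all add: finite_moment_def)
  have A_nonneg: "0 \<le> A \<omega>" for \<omega> using D_le[of \<omega>] by linarith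
  have A_int: "integrable M (\<lambda>\<omega>. A \<omega> ^ k)" and D_int: "integrable M (\<lambda>\<omega>. \<bar>D \<omega>\<bar> ^ k)"
    using A D A_nonneg by (simp_all add: finite_moment_def)
  have exps: "real (k - 2) / real k + 2 / real k = 1" "0 \<le> real (k - 2) / real k" "0 \<le> 2 / real k"
    using k by (auto simp: field_simps of_nat_diff)
  have D_powr: "(\<bar>D \<omega>\<bar> ^ k) powr (2 / real k) = (D \<omega>)\<^sup>2" for \<omega>
    using power_powr_divide[of "\<bar>D \<omega>\<bar>" k 2] powr_realpow'[of "\<bar>D \<omega>\<bar>" 2] k by simp
  have A_powr: "(A \<omega> ^ k) powr (real (k - 2) / real k) = A \<omega> ^ (k - 2)" if "A \<omega> \<noteq> 0" for \<omega>
    using power_powr_divide[of "A \<omega>" k "k - 2"] powr_realpow[of "A \<omega>" "k - 2"] A_nonneg[of \<omega>] that k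
    by simp
  have pointwise: "A \<omega> ^ (k - 2) * (D \<omega>)\<^sup>2 = (A \<omega> ^ k) powr (real (k - 2) / real k) * (\<bar>D \<omega>\<bar> ^ k) powr (2 / real k)" for \<omega>
    using D_le[of \<omega>] A_powr[of \<omega>] D_powr[of \<omega>] by (cases "A \<omega> = 0") auto
  show "integrable M (\<lambda>\<omega>. A \<omega> ^ (k - 2) * (D \<omega>)\<^sup>2)"
    unfolding pointwise using A_int D_int A_nonneg exps
    by (intro integrable_powr_mult_powr) auto
  have "(\<integral>\<omega>. A \<omega> ^ (k - 2) * (D \<omega>)\<^sup>2 \<partial>M)
      \<le> (\<integral>\<omega>. A \<omega> ^ k \<partial>M) powr (real (k - 2) / real k) * (\<integral>\<omega>. \<bar>D \<omega>\<bar> ^ k \<partial>M) powr (2 / real k)"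
    unfolding pointwise using A_int D_int A_nonneg exps by (intro Hoelder_integral) auto
  also have "\<dots> \<le> Lnorm M k A ^ (k - 2) * (Lnorm M k D)\<^sup>2"
    using k A_nonneg unfolding Lnorm_def
    using powr_divide_le_power[of "\<integral>\<omega>. \<bar>D \<omega>\<bar> ^ k \<partial>M" k 2]
      powr_divide_le_power[of "\<integral>\<omega>. A \<omega> ^ k \<partial>M" k "k - 2"]
    by (intro mult_mono) (auto intro!: integral_nonneg_AE)
  finally show "(\<integral>\<omega>. A \<omega> ^ (k - 2) * (D \<omega>)\<^sup>2 \<partial>M) \<le> Lnorm M k A ^ (k - 2) * (Lnorm M k D)\<^sup>2" .
qed

lemma integral_abs_add_power_le:
  assumes k: "2 \<le> k" and S: "finite_moment M k S" and D: "finite_moment M k D"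
  shows "(\<integral>\<omega>. \<bar>S \<omega> + D \<omega>\<bar> ^ k \<partial>M)
      \<le> (\<integral>\<omega>. \<bar>S \<omega>\<bar> ^ k \<partial>M) + real k * (\<integral>\<omega>. \<bar>S \<omega>\<bar> ^ (k - 2) * S \<omega> * D \<omega> \<partial>M)
        + (real k * (real k - 1) / 2) * (Lnorm M k S + Lnorm M k D) ^ (k - 2) * (Lnorm M k D)\<^sup>2"
proof -
  define A where "A \<omega> = \<bar>S \<omega>\<bar> + \<bar>D \<omega>\<bar>" for \<omega>
  define c where "c = real k * (real k - 1) / 2"
  have A: "finite_moment M k A"
    unfolding A_def by (intro finite_moment_add finite_moment_abs S D)
  have A_le: "Lnorm M k A \<le> Lnorm M k S + Lnorm M k D"
    using Minkowski_Lnorm[OF _ finite_moment_abs[OF S] finite_moment_abs[OF D]] k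
    unfolding A_def Lnorm_abs by simp
  note second_order = integral_power_mult_square_le[OF k A D]
  have pointwise: "\<bar>S \<omega> + D \<omega>\<bar> ^ k
      \<le> \<bar>S \<omega>\<bar> ^ k + real k * (\<bar>S \<omega>\<bar> ^ (k - 2) * S \<omega> * D \<omega>) + c * (A \<omega> ^ (k - 2) * (D \<omega>)\<^sup>2)" for \<omega>
    using abs_add_power_le_second_order[OF k, of "S \<omega>" "D \<omega>"] by (simp add: c_def A_def mult_ac)
  have "(\<integral>\<omega>. \<bar>S \<omega> + D \<omega>\<bar> ^ k \<partial>M)
      \<le> (\<integral>\<omega>. \<bar>S \<omega>\<bar> ^ k + real k * (\<bar>S \<omega>\<bar> ^ (k - 2) * S \<omega> * D \<omega>) + c * (A \<omega> ^ (k - 2) * (D \<omega>)\<^sup>2) \<partial>M)"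
    using finite_moment_integrable[OF finite_moment_add[OF S D]] finite_moment_integrable[OF S]
      integrable_abs_power_mult[OF k S D] second_order(1) pointwise
    by (intro integral_mono Bochner_Integration.integrable_add integrable_mult_right) (auto simp: A_def)
  also have "\<dots> = (\<integral>\<omega>. \<bar>S \<omega>\<bar> ^ k \<partial>M) + real k * (\<integral>\<omega>. \<bar>S \<omega>\<bar> ^ (k - 2) * S \<omega> * D \<omega> \<partial>M)
      + c * (\<integral>\<omega>. A \<omega> ^ (k - 2) * (D \<omega>)\<^sup>2 \<partial>M)"
    using finite_moment_integrable[OF S] integrable_abs_power_mult[OF k S D] second_order(1)
    by (simp add: A_def)
  also have "\<dots> \<le> (\<integral>\<omega>. \<bar>S \<omega>\<bar> ^ k \<partial>M) + real k * (\<integral>\<omega>. \<bar>S \<omega>\<bar> ^ (k - 2) * S \<omega> * D \<omega> \<partial>M)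
      + c * ((Lnorm M k S + Lnorm M k D) ^ (k - 2) * (Lnorm M k D)\<^sup>2)"
  proof -
    have "(\<integral>\<omega>. A \<omega> ^ (k - 2) * (D \<omega>)\<^sup>2 \<partial>M) \<le> (Lnorm M k S + Lnorm M k D) ^ (k - 2) * (Lnorm M k D)\<^sup>2"
      using second_order(2)
        mult_right_mono[OF power_mono[OF A_le Lnorm_nonneg, of "k - 2"] zero_le_power2[of "Lnorm M k D"]]
      by (simp add: A_def)
    then show ?thesis using k by (simp add: c_def mult_left_mono)
  qed
  finally show ?thesis by (simp add: c_def mult.assoc)
qed

lemma Lnorm_add_square_le:
  assumes k: "2 \<le> k" and S: "finite_moment M k S" and D: "finite_moment M k D"
    and orth: "(\<integral>\<omega>. \<bar>S \<omega>\<bar> ^ (k - 2) * S \<omega> * D \<omega> \<partial>M) = 0"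
  shows "(Lnorm M k (\<lambda>\<omega>. S \<omega> + D \<omega>))\<^sup>2 \<le> (Lnorm M k S)\<^sup>2 + 6 * real k * (Lnorm M k D)\<^sup>2"
proof (rule square_le_of_power_le_second_order[OF k Lnorm_nonneg Lnorm_nonneg Lnorm_nonneg])
  show "Lnorm M k (\<lambda>\<omega>. S \<omega> + D \<omega>) \<le> Lnorm M k S + Lnorm M k D"
    using k by (intro Minkowski_Lnorm S D) simp
  show "Lnorm M k (\<lambda>\<omega>. S \<omega> + D \<omega>) ^ k
      \<le> Lnorm M k S ^ k + (real k * (real k - 1) / 2) * (Lnorm M k S + Lnorm M k D) ^ (k - 2) * (Lnorm M k D)\<^sup>2"
    using integral_abs_add_power_le[OF k S D] orth k by (simp add: Lnorm_power)
qed

text \<open>A Burkholder-type inequality for martingale differences, with the martingale property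
  replaced by the weaker orthogonality condition it implies.\<close>

lemma Lnorm_sum_square_le:
  fixes D :: "nat \<Rightarrow> 'a \<Rightarrow> real"
  assumes k: "2 \<le> k" and D: "\<And>l. l \<in> {1..m} \<Longrightarrow> finite_moment M k (D l)"
    and orth: "\<And>l. l \<in> {1..m} \<Longrightarrow>
      (\<integral>\<omega>. \<bar>\<Sum>r\<in>{1..<l}. D r \<omega>\<bar> ^ (k - 2) * (\<Sum>r\<in>{1..<l}. D r \<omega>) * D l \<omega> \<partial>M) = 0"
  shows "(Lnorm M k (\<lambda>\<omega>. \<Sum>l\<in>{1..m}. D l \<omega>))\<^sup>2 \<le> 6 * real k * (\<Sum>l\<in>{1..m}. (Lnorm M k (D l))\<^sup>2)"
  using D orth
proof (induction m)
  case 0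
  then show ?case using k by (simp add: Lnorm_def zero_power)
next
  case (Suc m)
  have "(Lnorm M k (\<lambda>\<omega>. \<Sum>l\<in>{1..Suc m}. D l \<omega>))\<^sup>2
      = (Lnorm M k (\<lambda>\<omega>. (\<Sum>l\<in>{1..m}. D l \<omega>) + D (Suc m) \<omega>))\<^sup>2"
    by simp
  also have "\<dots> \<le> (Lnorm M k (\<lambda>\<omega>. \<Sum>l\<in>{1..m}. D l \<omega>))\<^sup>2 + 6 * real k * (Lnorm M k (D (Suc m)))\<^sup>2"
  proof (rule Lnorm_add_square_le[OF k])
    show "finite_moment M k (\<lambda>\<omega>. \<Sum>l\<in>{1..m}. D l \<omega>)"
      using Suc.prems k by (intro finite_moment_sum) auto
    show "(\<integral>\<omega>. \<bar>\<Sum>l\<in>{1..m}. D l \<omega>\<bar> ^ (k - 2) * (\<Sum>l\<in>{1..m}. D l \<omega>) * D (Suc m) \<omega> \<partial>M) = 0"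
      using Suc.prems(2)[of "Suc m"] by (simp add: atLeastLessThanSuc_atLeastAtMost)
  qed (use Suc.prems in auto)
  also have "\<dots> \<le> 6 * real k * (\<Sum>l\<in>{1..Suc m}. (Lnorm M k (D l))\<^sup>2)"
    using Suc by (simp add: algebra_simps)
  finally show ?case .
qed

section \<open>Independent identically distributed centred errors\<close>

locale centred_iid = prob_space M for M :: "'a measure" +
  fixes \<xi> :: "nat \<Rightarrow> 'a \<Rightarrow> real" and k :: nat
  assumes measurable_xi[measurable]: "\<And>i. \<xi> i \<in> borel_measurable M"
    and indep_xi: "indep_vars (\<lambda>_. borel) \<xi> UNIV"
    and distr_xi: "\<And>i. distr M borel (\<xi> i) = distr M borel (\<xi> 1)"
    and integral_xi_1: "(\<integral>\<omega>. \<xi> 1 \<omega> \<partial>M) = 0"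
    and two_le_k: "2 \<le> k"
    and integrable_xi_1_power: "integrable M (\<lambda>\<omega>. \<xi> 1 \<omega> ^ (2 * k))"
begin

lemma integral_xi_eq:
  fixes g :: "real \<Rightarrow> real"
  assumes "g \<in> borel_measurable borel"
  shows "(\<integral>\<omega>. g (\<xi> i \<omega>) \<partial>M) = (\<integral>\<omega>. g (\<xi> 1 \<omega>) \<partial>M)"
  using integral_distr[OF measurable_xi[of i] assms] integral_distr[OF measurable_xi[of 1] assms]
  by (simp add: distr_xi[of i])

lemma integrable_xi_iff:
  fixes g :: "real \<Rightarrow> real"
  assumes "g \<in> borel_measurable borel"
  shows "integrable M (\<lambda>\<omega>. g (\<xi> i \<omega>)) \<longleftrightarrow> integrable M (\<lambda>\<omega>. g (\<xi> 1 \<omega>))"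
  using integrable_distr_eq[OF measurable_xi[of i] assms] integrable_distr_eq[OF measurable_xi[of 1] assms]
  by (simp add: distr_xi[of i])

lemma integrable_abs_power_xi:
  assumes "j \<le> 2 * k"
  shows "integrable M (\<lambda>\<omega>. \<bar>\<xi> i \<omega>\<bar> ^ j)"
proof -
  have "integrable M (\<lambda>\<omega>. \<bar>\<xi> 1 \<omega>\<bar> ^ j)"
  proof (rule Bochner_Integration.integrable_bound[of _ "\<lambda>\<omega>. 1 + \<xi> 1 \<omega> ^ (2 * k)"])
    show "integrable M (\<lambda>\<omega>. 1 + \<xi> 1 \<omega> ^ (2 * k))" using integrable_xi_1_power by simp
    have "\<bar>x\<bar> ^ j \<le> 1 + x ^ (2 * k)" for x :: real
    proof (cases "\<bar>x\<bar> \<le> 1")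
      case True
      then have "\<bar>x\<bar> ^ j \<le> 1" by (intro power_le_one) auto
      moreover have "0 \<le> x ^ (2 * k)" by (simp add: zero_le_even_power)
      ultimately show ?thesis by linarith
    next
      case False
      then have "\<bar>x\<bar> ^ j \<le> \<bar>x\<bar> ^ (2 * k)" using assms by (intro power_increasing) auto
      then show ?thesis by (simp add: power_even_abs)
    qed
    then show "AE \<omega> in M. norm (\<bar>\<xi> 1 \<omega>\<bar> ^ j) \<le> norm (1 + \<xi> 1 \<omega> ^ (2 * k))"
      by (intro AE_I2) (simp add: power_mult)
  qed measurable
  then show ?thesis using integrable_xi_iff[of "\<lambda>x. \<bar>x\<bar> ^ j" i] by simp
qed

lemma integrable_xi: "integrable M (\<xi> i)"
  using integrable_abs_power_xi[of 1 i] two_le_k integrable_abs_iff[of "\<xi> i" M] by simp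

lemma integral_xi: "(\<integral>\<omega>. \<xi> i \<omega> \<partial>M) = 0"
  using integral_xi_eq[of "\<lambda>x. x" i] integral_xi_1 by simp

lemma integrable_xi_square: "integrable M (\<lambda>\<omega>. (\<xi> i \<omega>)\<^sup>2)"
  using integrable_abs_power_xi[of 2 i] two_le_k by simp

lemma finite_moment_xi: "finite_moment M k (\<xi> i)"
  using integrable_abs_power_xi[of k i] by (simp add: finite_moment_def)

lemma finite_moment_xi_square: "finite_moment M k (\<lambda>\<omega>. (\<xi> i \<omega>)\<^sup>2)"
  using integrable_abs_power_xi[of "2 * k" i] by (simp add: finite_moment_def power_mult)

definition sigma2 :: real where
  "sigma2 = (\<integral>\<omega>. (\<xi> 1 \<omega>)\<^sup>2 \<partial>M)"

definition moment_root :: real where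
  "moment_root = (\<integral>\<omega>. \<xi> 1 \<omega> ^ (2 * k) \<partial>M) powr (1 / real k)"

lemma integral_xi_square: "(\<integral>\<omega>. (\<xi> i \<omega>)\<^sup>2 \<partial>M) = sigma2"
  using integral_xi_eq[of "\<lambda>x. x\<^sup>2" i] by (simp add: sigma2_def)

lemma sigma2_nonneg: "0 \<le> sigma2"
  by (simp add: sigma2_def)

lemma moment_root_nonneg: "0 \<le> moment_root"
  by (simp add: moment_root_def)

lemma Lnorm_xi_square: "Lnorm M k (\<lambda>\<omega>. (\<xi> i \<omega>)\<^sup>2) = moment_root"
  using integral_xi_eq[of "\<lambda>x. x ^ (2 * k)" i] by (simp add: Lnorm_def moment_root_def power_mult)

lemma Lnorm_xi_square_le:
  assumes "0 < j" "j \<le> 2 * k"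
  shows "(Lnorm M j (\<xi> i))\<^sup>2 \<le> moment_root"
proof -
  have "(Lnorm M j (\<xi> i))\<^sup>2 \<le> (Lnorm M (2 * k) (\<xi> i))\<^sup>2"
    using assms integrable_abs_power_xi[of "2 * k" i]
    by (intro power_mono Lnorm_mono) (auto simp: finite_moment_def Lnorm_nonneg)
  also have "\<dots> = ((\<integral>\<omega>. \<xi> i \<omega> ^ (2 * k) \<partial>M) powr (1 / real (2 * k)))\<^sup>2"
    by (simp add: Lnorm_def power_even_abs)
  also have "\<dots> = (\<integral>\<omega>. \<xi> i \<omega> ^ (2 * k) \<partial>M) powr (1 / real k)"
  proof -
    have "1 / real (2 * k) + 1 / real (2 * k) = 1 / real k" by simp
    then show ?thesis by (simp add: power2_eq_square powr_add[symmetric])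
  qed
  also have "\<dots> = moment_root"
    using integral_xi_eq[of "\<lambda>x. x ^ (2 * k)" i] by (simp add: moment_root_def)
  finally show ?thesis .
qed

lemma sigma2_le_moment_root: "sigma2 \<le> moment_root"
  using Lnorm_xi_square_le[of 2 1] Lnorm_power[of 2 M "\<xi> 1"] two_le_k by (simp add: sigma2_def)

text \<open>Measurability with respect to the \<open>\<sigma>\<close>-algebra generated by the \<open>\<xi> j\<close>, \<open>j \<in> I\<close>, stated
  via a Borel function on the product space; it replaces conditional expectations throughout.\<close>

definition determined_by :: "nat set \<Rightarrow> ('a \<Rightarrow> real) \<Rightarrow> bool" where
  "determined_by I G \<longleftrightarrow>
     (\<exists>F. F \<in> borel_measurable (PiM I (\<lambda>_. borel)) \<and> G = (\<lambda>\<omega>. F (\<lambda>j\<in>I. \<xi> j \<omega>)))"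

lemma determined_by_xi: "j \<in> I \<Longrightarrow> determined_by I (\<xi> j)"
  unfolding determined_by_def by (intro exI[of _ "\<lambda>f. f j"]) (auto simp: fun_eq_iff)

lemma determined_by_comp:
  assumes g: "g \<in> borel_measurable borel" and G: "determined_by I G"
  shows "determined_by I (\<lambda>\<omega>. g (G \<omega>))"
proof -
  obtain F where "F \<in> borel_measurable (PiM I (\<lambda>_. borel))" "G = (\<lambda>\<omega>. F (\<lambda>j\<in>I. \<xi> j \<omega>))"
    using G by (auto simp: determined_by_def)
  then show ?thesis
    unfolding determined_by_def using g by (intro exI[of _ "\<lambda>f. g (F f)"]) auto
qed

lemma determined_by_const: "determined_by I (\<lambda>_. c)"
  unfolding determined_by_def by (intro exI[of _ "\<lambda>_. c"]) auto

lemma determined_by_add: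
  assumes "determined_by I G1" "determined_by I G2"
  shows "determined_by I (\<lambda>\<omega>. G1 \<omega> + G2 \<omega>)"
proof -
  obtain F1 F2 where "F1 \<in> borel_measurable (PiM I (\<lambda>_. borel))" "F2 \<in> borel_measurable (PiM I (\<lambda>_. borel))"
    "G1 = (\<lambda>\<omega>. F1 (\<lambda>j\<in>I. \<xi> j \<omega>))" "G2 = (\<lambda>\<omega>. F2 (\<lambda>j\<in>I. \<xi> j \<omega>))"
    using assms by (auto simp: determined_by_def)
  then show ?thesis unfolding determined_by_def by (intro exI[of _ "\<lambda>f. F1 f + F2 f"]) auto
qed

lemma determined_by_mult:
  assumes "determined_by I G1" "determined_by I G2"
  shows "determined_by I (\<lambda>\<omega>. G1 \<omega> * G2 \<omega>)"
proof -
  obtain F1 F2 where "F1 \<in> borel_measurable (PiM I (\<lambda>_. borel))" "F2 \<in> borel_measurable (PiM I (\<lambda>_. borel))"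
    "G1 = (\<lambda>\<omega>. F1 (\<lambda>j\<in>I. \<xi> j \<omega>))" "G2 = (\<lambda>\<omega>. F2 (\<lambda>j\<in>I. \<xi> j \<omega>))"
    using assms by (auto simp: determined_by_def)
  then show ?thesis unfolding determined_by_def by (intro exI[of _ "\<lambda>f. F1 f * F2 f"]) auto
qed

lemma determined_by_sum:
  "finite A \<Longrightarrow> (\<And>x. x \<in> A \<Longrightarrow> determined_by I (G x)) \<Longrightarrow> determined_by I (\<lambda>\<omega>. \<Sum>x\<in>A. G x \<omega>)"
  by (induction A rule: finite_induct) (auto intro: determined_by_const determined_by_add)

lemma determined_by_mono:
  assumes IJ: "I \<subseteq> J" and G: "determined_by I G"
  shows "determined_by J G"
proof -
  obtain F where F: "F \<in> borel_measurable (PiM I (\<lambda>_. borel))" and GF: "G = (\<lambda>\<omega>. F (\<lambda>j\<in>I. \<xi> j \<omega>))"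
    using G by (auto simp: determined_by_def)
  have "(\<lambda>f. F (restrict f I)) \<in> borel_measurable (PiM J (\<lambda>_. borel))"
    using measurable_compose[OF measurable_restrict_subset[OF IJ] F] by (simp add: comp_def)
  moreover have "restrict (\<lambda>j\<in>J. \<xi> j \<omega>) I = (\<lambda>j\<in>I. \<xi> j \<omega>)" for \<omega>
    using IJ by (auto simp: fun_eq_iff)
  ultimately show ?thesis
    unfolding determined_by_def GF by (intro exI[of _ "\<lambda>f. F (restrict f I)"]) auto
qed

lemma indep_var_determined_by:
  assumes i: "i \<notin> I" and G: "determined_by I G" and h: "h \<in> borel_measurable borel"
  shows "indep_var borel (\<lambda>\<omega>. h (\<xi> i \<omega>)) borel G"
proof -
  obtain F where F: "F \<in> borel_measurable (PiM I (\<lambda>_. borel))" and GF: "G = (\<lambda>\<omega>. F (\<lambda>j\<in>I. \<xi> j \<omega>))"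
    using G by (auto simp: determined_by_def)
  have h': "(\<lambda>f. h (f i)) \<in> borel_measurable (PiM {i} (\<lambda>_. borel))"
    using measurable_compose[OF measurable_component_singleton[of i "{i}" "\<lambda>_. borel"] h] by (simp add: comp_def)
  have "indep_var borel ((\<lambda>f. h (f i)) \<circ> (\<lambda>\<omega>. restrict (\<lambda>j. \<xi> j \<omega>) {i}))
                  borel (F \<circ> (\<lambda>\<omega>. restrict (\<lambda>j. \<xi> j \<omega>) I))"
    using i by (intro indep_var_compose[OF indep_var_restrict[OF indep_xi] h' F]) auto
  then show ?thesis by (simp add: GF comp_def)
qed

lemma integral_mult_determined_by:
  assumes i: "i \<notin> I" and G: "determined_by I G" and h: "h \<in> borel_measurable borel"
    and "integrable M (\<lambda>\<omega>. h (\<xi> i \<omega>))" "integrable M G"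
  shows "integrable M (\<lambda>\<omega>. h (\<xi> i \<omega>) * G \<omega>)"
    and "(\<integral>\<omega>. h (\<xi> i \<omega>) * G \<omega> \<partial>M) = (\<integral>\<omega>. h (\<xi> i \<omega>) \<partial>M) * (\<integral>\<omega>. G \<omega> \<partial>M)"
  using indep_var_integrable[OF indep_var_determined_by[OF i G h]]
    indep_var_lebesgue_integral[OF indep_var_determined_by[OF i G h]] assms(4,5) by auto

end

section \<open>Quadratic forms in the errors\<close>

lemma sum_square_diag_lower:
  fixes b :: "nat \<Rightarrow> nat \<Rightarrow> 'b :: comm_monoid_add"
  shows "(\<Sum>i\<in>{1..n}. \<Sum>j\<in>{1..n}. b i j) = (\<Sum>i\<in>{1..n}. b i i + (\<Sum>j\<in>{1..<i}. b i j + b j i))"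
proof (induction n)
  case (Suc n)
  have "(\<Sum>i\<in>{1..Suc n}. \<Sum>j\<in>{1..Suc n}. b i j)
      = (\<Sum>i\<in>{1..n}. \<Sum>j\<in>{1..n}. b i j) + (\<Sum>i\<in>{1..n}. b i (Suc n)) + ((\<Sum>j\<in>{1..n}. b (Suc n) j) + b (Suc n) (Suc n))"
    by (simp add: sum.cl_ivl_Suc sum.distrib ac_simps)
  also have "\<dots> = (\<Sum>i\<in>{1..Suc n}. b i i + (\<Sum>j\<in>{1..<i}. b i j + b j i))"
    using Suc.IH by (simp add: sum.cl_ivl_Suc atLeastLessThanSuc_atLeastAtMost sum.distrib ac_simps)
  finally show ?case .
qed simp

context centred_iid
begin

lemma integral_mult_determined_by_eq_0:
  assumes "l \<notin> I" "determined_by I G" "integrable M G"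
    and "h \<in> borel_measurable borel" "integrable M (\<lambda>\<omega>. h (\<xi> l \<omega>))" "(\<integral>\<omega>. h (\<xi> l \<omega>) \<partial>M) = 0"
  shows "(\<integral>\<omega>. h (\<xi> l \<omega>) * G \<omega> \<partial>M) = 0"
  using integral_mult_determined_by(2)[of l I G h] assms by simp

lemma determined_by_odd_power:
  "determined_by I S \<Longrightarrow> determined_by I (\<lambda>\<omega>. \<bar>S \<omega>\<bar> ^ (k - 2) * S \<omega>)"
  using determined_by_comp[of "\<lambda>x. \<bar>x\<bar> ^ (k - 2) * x" I S] by simp

lemma integrable_odd_power: "finite_moment M k S \<Longrightarrow> integrable M (\<lambda>\<omega>. \<bar>S \<omega>\<bar> ^ (k - 2) * S \<omega>)"
  using integrable_abs_power_mult[OF two_le_k, of M S "\<lambda>_. 1"] finite_moment_const by simp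

definition lin_part :: "(nat \<Rightarrow> nat \<Rightarrow> real) \<Rightarrow> nat \<Rightarrow> 'a \<Rightarrow> real" where
  "lin_part a i \<omega> = (\<Sum>j\<in>{1..<i}. a i j * \<xi> j \<omega>)"

definition mart_diff :: "(nat \<Rightarrow> nat \<Rightarrow> real) \<Rightarrow> nat \<Rightarrow> 'a \<Rightarrow> real" where
  "mart_diff a i \<omega> = a i i * ((\<xi> i \<omega>)\<^sup>2 - sigma2) + 2 * \<xi> i \<omega> * lin_part a i \<omega>"

lemma determined_by_lin_part: "determined_by {1..<i} (lin_part a i)"
  unfolding lin_part_def[abs_def]
  by (intro determined_by_sum determined_by_mult determined_by_const determined_by_xi) auto

lemma finite_moment_lin_part: "finite_moment M k (lin_part a i)"
  unfolding lin_part_def[abs_def] using two_le_k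
  by (intro finite_moment_sum finite_moment_cmult finite_moment_xi) auto

lemma Lnorm_lin_part_square_le:
  "(Lnorm M k (lin_part a i))\<^sup>2 \<le> 6 * real k * moment_root * (\<Sum>j\<in>{1..<i}. (a i j)\<^sup>2)"
proof -
  define D where "D = (\<lambda>j \<omega>. a i j * \<xi> j \<omega>)"
  have D: "finite_moment M k (D j)" for j unfolding D_def by (intro finite_moment_cmult finite_moment_xi)
  have orth: "(\<integral>\<omega>. \<bar>\<Sum>r\<in>{1..<l}. D r \<omega>\<bar> ^ (k - 2) * (\<Sum>r\<in>{1..<l}. D r \<omega>) * D l \<omega> \<partial>M) = 0" for l
  proof -
    define G where "G \<omega> = \<bar>\<Sum>r\<in>{1..<l}. D r \<omega>\<bar> ^ (k - 2) * (\<Sum>r\<in>{1..<l}. D r \<omega>)" for \<omega>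
    have "determined_by {1..<l} (\<lambda>\<omega>. \<Sum>r\<in>{1..<l}. D r \<omega>)"
      unfolding D_def by (intro determined_by_sum determined_by_mult determined_by_const determined_by_xi) auto
    then have "determined_by {1..<l} G" unfolding G_def by (rule determined_by_odd_power)
    moreover have "integrable M G"
      unfolding G_def using two_le_k D by (intro integrable_odd_power finite_moment_sum) auto
    ultimately have "(\<integral>\<omega>. a i l * \<xi> l \<omega> * G \<omega> \<partial>M) = 0"
      using integrable_xi[of l] integral_xi[of l]
      by (intro integral_mult_determined_by_eq_0[of l "{1..<l}" G "\<lambda>x. a i l * x"]) auto
    then show ?thesis by (simp add: D_def G_def ac_simps)
  qed
  have "{1..<i} = {1..i - 1}" by auto
  then have "(Lnorm M k (lin_part a i))\<^sup>2 \<le> 6 * real k * (\<Sum>j\<in>{1..<i}. (Lnorm M k (D j))\<^sup>2)"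
    using Lnorm_sum_square_le[OF two_le_k, of "i - 1" M D] D orth
    by (simp add: lin_part_def[abs_def] D_def)
  also have "\<dots> \<le> 6 * real k * (\<Sum>j\<in>{1..<i}. (a i j)\<^sup>2 * moment_root)"
    using two_le_k Lnorm_xi_square_le[of k]
    by (intro mult_left_mono sum_mono) (auto simp: D_def Lnorm_cmult power_mult_distrib mult_left_mono)
  finally show ?thesis by (simp add: sum_distrib_left sum_distrib_right ac_simps)
qed

lemma Lnorm_xi_mult_lin_part:
  shows "finite_moment M k (\<lambda>\<omega>. \<xi> i \<omega> * lin_part a i \<omega>)"
    and "Lnorm M k (\<lambda>\<omega>. \<xi> i \<omega> * lin_part a i \<omega>) = Lnorm M k (\<xi> i) * Lnorm M k (lin_part a i)"
proof -
  have L: "determined_by {1..<i} (\<lambda>\<omega>. \<bar>lin_part a i \<omega>\<bar> ^ k)"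
    using determined_by_comp[of "\<lambda>x. \<bar>x\<bar> ^ k"] determined_by_lin_part by simp
  have eq: "(\<lambda>\<omega>. \<bar>\<xi> i \<omega> * lin_part a i \<omega>\<bar> ^ k) = (\<lambda>\<omega>. \<bar>\<xi> i \<omega>\<bar> ^ k * \<bar>lin_part a i \<omega>\<bar> ^ k)"
    by (simp add: abs_mult power_mult_distrib)
  note product = integral_mult_determined_by[OF _ L, of i "\<lambda>x. \<bar>x\<bar> ^ k"]
  show "finite_moment M k (\<lambda>\<omega>. \<xi> i \<omega> * lin_part a i \<omega>)"
    unfolding finite_moment_def eq using product(1) finite_moment_xi[of i] finite_moment_lin_part[of a i]
    by (auto simp: finite_moment_def)
  show "Lnorm M k (\<lambda>\<omega>. \<xi> i \<omega> * lin_part a i \<omega>) = Lnorm M k (\<xi> i) * Lnorm M k (lin_part a i)"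
    unfolding Lnorm_def eq using product(2) finite_moment_xi[of i] finite_moment_lin_part[of a i]
    by (simp add: finite_moment_def powr_mult integral_nonneg_AE)
qed

lemma finite_moment_xi_square_centred: "finite_moment M k (\<lambda>\<omega>. (\<xi> i \<omega>)\<^sup>2 - sigma2)"
  using finite_moment_add[OF finite_moment_xi_square finite_moment_const, of i "- sigma2"] by simp

lemma Lnorm_xi_square_centred_le: "Lnorm M k (\<lambda>\<omega>. (\<xi> i \<omega>)\<^sup>2 - sigma2) \<le> 2 * moment_root"
proof -
  have "Lnorm M k (\<lambda>\<omega>. (\<xi> i \<omega>)\<^sup>2 + (- sigma2)) \<le> Lnorm M k (\<lambda>\<omega>. (\<xi> i \<omega>)\<^sup>2) + Lnorm M k (\<lambda>_. - sigma2)"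
    using two_le_k by (intro Minkowski_Lnorm finite_moment_xi_square finite_moment_const) auto
  also have "\<dots> = moment_root + sigma2"
    using Lnorm_xi_square Lnorm_const sigma2_nonneg two_le_k by simp
  finally show ?thesis using sigma2_le_moment_root by simp
qed

lemma finite_moment_mart_diff: "finite_moment M k (mart_diff a i)"
  unfolding mart_diff_def[abs_def] mult.assoc
  by (intro finite_moment_add finite_moment_cmult finite_moment_xi_square_centred Lnorm_xi_mult_lin_part(1))

lemma Lnorm_mart_diff_square_le:
  "(Lnorm M k (mart_diff a i))\<^sup>2 \<le> 48 * real k * moment_root\<^sup>2 * ((a i i)\<^sup>2 + (\<Sum>j\<in>{1..<i}. (a i j)\<^sup>2))"
proof -
  have k: "0 < k" using two_le_k by simp
  define X where "X = Lnorm M k (\<xi> i)"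
  define Y where "Y = Lnorm M k (lin_part a i)"
  have "Lnorm M k (mart_diff a i)
      \<le> Lnorm M k (\<lambda>\<omega>. a i i * ((\<xi> i \<omega>)\<^sup>2 - sigma2)) + Lnorm M k (\<lambda>\<omega>. 2 * (\<xi> i \<omega> * lin_part a i \<omega>))"
    unfolding mart_diff_def[abs_def] mult.assoc using two_le_k
    by (intro Minkowski_Lnorm finite_moment_cmult finite_moment_xi_square_centred
        Lnorm_xi_mult_lin_part(1)) auto
  also have "\<dots> = \<bar>a i i\<bar> * Lnorm M k (\<lambda>\<omega>. (\<xi> i \<omega>)\<^sup>2 - sigma2) + 2 * (X * Y)"
    using Lnorm_xi_mult_lin_part(2) by (simp add: Lnorm_cmult[OF k] X_def Y_def)
  also have "\<dots> \<le> \<bar>a i i\<bar> * (2 * moment_root) + 2 * (X * Y)"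
    using Lnorm_xi_square_centred_le[of i] by (simp add: mult_left_mono)
  finally have "(Lnorm M k (mart_diff a i))\<^sup>2 \<le> (\<bar>a i i\<bar> * (2 * moment_root) + 2 * (X * Y))\<^sup>2"
    by (intro power_mono) (auto simp: Lnorm_nonneg)
  also have "\<dots> \<le> 8 * ((a i i)\<^sup>2 * moment_root\<^sup>2) + 8 * (X\<^sup>2 * Y\<^sup>2)"
    using sum_squares_bound[of "\<bar>a i i\<bar> * (2 * moment_root)" "2 * (X * Y)"]
    by (simp add: power2_eq_square algebra_simps)
  also have "X\<^sup>2 * Y\<^sup>2 \<le> moment_root * (6 * real k * moment_root * (\<Sum>j\<in>{1..<i}. (a i j)\<^sup>2))"
    unfolding X_def Y_def using Lnorm_xi_square_le[of k i] Lnorm_lin_part_square_le[of a i] two_le_k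
    by (intro mult_mono) (auto intro!: sum_nonneg moment_root_nonneg)
  also have "8 * ((a i i)\<^sup>2 * moment_root\<^sup>2) \<le> 48 * real k * ((a i i)\<^sup>2 * moment_root\<^sup>2)"
    using two_le_k by (intro mult_right_mono) auto
  finally show ?thesis by (simp add: power2_eq_square algebra_simps)
qed

lemma determined_by_mart_diff:
  assumes "1 \<le> i" shows "determined_by {1..i} (mart_diff a i)"
proof -
  have "determined_by {1..i} (\<lambda>\<omega>. (\<xi> i \<omega>)\<^sup>2 - sigma2)"
    using determined_by_comp[of "\<lambda>x. x\<^sup>2 - sigma2" "{1..i}" "\<xi> i"] determined_by_xi assms by simp
  then show ?thesis
    unfolding mart_diff_def[abs_def] using assms
    by (intro determined_by_add determined_by_mult determined_by_const determined_by_xi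
        determined_by_mono[OF _ determined_by_lin_part]) auto
qed

lemma mart_diff_orthogonal:
  "(\<integral>\<omega>. \<bar>\<Sum>r\<in>{1..<l}. mart_diff a r \<omega>\<bar> ^ (k - 2) * (\<Sum>r\<in>{1..<l}. mart_diff a r \<omega>) * mart_diff a l \<omega> \<partial>M) = 0"
proof -
  define G where "G = (\<lambda>\<omega>. \<bar>\<Sum>r\<in>{1..<l}. mart_diff a r \<omega>\<bar> ^ (k - 2) * (\<Sum>r\<in>{1..<l}. mart_diff a r \<omega>))"
  have "determined_by {1..<l} (\<lambda>\<omega>. \<Sum>r\<in>{1..<l}. mart_diff a r \<omega>)"
    by (intro determined_by_sum) (auto intro: determined_by_mono[OF _ determined_by_mart_diff])
  then have G: "determined_by {1..<l} G" unfolding G_def by (rule determined_by_odd_power)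
  have G_int: "integrable M G"
    unfolding G_def using two_le_k by (intro integrable_odd_power finite_moment_sum finite_moment_mart_diff) auto
  have GL: "determined_by {1..<l} (\<lambda>\<omega>. G \<omega> * lin_part a l \<omega>)"
    by (intro determined_by_mult G determined_by_lin_part)
  have GL_int: "integrable M (\<lambda>\<omega>. G \<omega> * lin_part a l \<omega>)"
    unfolding G_def using two_le_k
    by (intro integrable_abs_power_mult finite_moment_sum finite_moment_mart_diff finite_moment_lin_part) auto
  have "(\<integral>\<omega>. ((\<xi> l \<omega>)\<^sup>2 - sigma2) * G \<omega> \<partial>M) = 0"
    using G G_int integrable_xi_square[of l] integral_xi_square[of l] prob_space
    by (intro integral_mult_determined_by_eq_0[of l "{1..<l}" G "\<lambda>x. x\<^sup>2 - sigma2"]) auto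
  moreover have "(\<integral>\<omega>. \<xi> l \<omega> * (G \<omega> * lin_part a l \<omega>) \<partial>M) = 0"
    using GL GL_int integrable_xi[of l] integral_xi[of l]
    by (intro integral_mult_determined_by_eq_0[of l "{1..<l}" _ "\<lambda>x. x"]) auto
  moreover have "integrable M (\<lambda>\<omega>. ((\<xi> l \<omega>)\<^sup>2 - sigma2) * G \<omega>)"
    using G G_int integrable_xi_square[of l]
    by (intro integral_mult_determined_by(1)[of l "{1..<l}" G "\<lambda>x. x\<^sup>2 - sigma2"]) auto
  moreover have "integrable M (\<lambda>\<omega>. \<xi> l \<omega> * (G \<omega> * lin_part a l \<omega>))"
    using GL GL_int integrable_xi[of l]
    by (intro integral_mult_determined_by(1)[of l "{1..<l}" _ "\<lambda>x. x"]) auto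
  ultimately have "(\<integral>\<omega>. a l l * (((\<xi> l \<omega>)\<^sup>2 - sigma2) * G \<omega>) + 2 * (\<xi> l \<omega> * (G \<omega> * lin_part a l \<omega>)) \<partial>M) = 0"
    by simp
  then show ?thesis by (simp add: G_def mart_diff_def[of a l] algebra_simps)
qed

lemma integral_xi_mult_xi: "(\<integral>\<omega>. \<xi> i \<omega> * \<xi> j \<omega> \<partial>M) = (if i = j then sigma2 else 0)"
proof (cases "i = j")
  case True then show ?thesis using integral_xi_square[of i] by (simp add: power2_eq_square)
next
  case False
  then show ?thesis
    using integral_mult_determined_by(2)[of i "{j}" "\<xi> j" "\<lambda>x. x"] determined_by_xi[of j "{j}"]
      integrable_xi integral_xi by auto
qed

lemma quadratic_form_eq_sum_mart_diff:
  assumes sym: "\<And>i j. a i j = a j i"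
  shows "(\<Sum>i\<in>{1..n}. \<Sum>j\<in>{1..n}. a i j * (\<xi> i \<omega> * \<xi> j \<omega> - (\<integral>\<omega>'. \<xi> i \<omega>' * \<xi> j \<omega>' \<partial>M)))
       = (\<Sum>i\<in>{1..n}. mart_diff a i \<omega>)"
proof -
  define b where "b i j = a i j * (\<xi> i \<omega> * \<xi> j \<omega> - (if i = j then sigma2 else 0))" for i j
  have "(\<Sum>i\<in>{1..n}. \<Sum>j\<in>{1..n}. a i j * (\<xi> i \<omega> * \<xi> j \<omega> - (\<integral>\<omega>'. \<xi> i \<omega>' * \<xi> j \<omega>' \<partial>M)))
      = (\<Sum>i\<in>{1..n}. b i i + (\<Sum>j\<in>{1..<i}. b i j + b j i))"
    unfolding sum_square_diag_lower[symmetric] by (simp add: b_def integral_xi_mult_xi)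
  also have "\<dots> = (\<Sum>i\<in>{1..n}. mart_diff a i \<omega>)"
  proof (intro sum.cong refl)
    fix i
    have "(\<Sum>j\<in>{1..<i}. b i j + b j i) = (\<Sum>j\<in>{1..<i}. 2 * \<xi> i \<omega> * (a i j * \<xi> j \<omega>))"
      using sym by (intro sum.cong) (auto simp: b_def algebra_simps)
    then show "b i i + (\<Sum>j\<in>{1..<i}. b i j + b j i) = mart_diff a i \<omega>"
      by (simp add: b_def mart_diff_def lin_part_def sum_distrib_left power2_eq_square)
  qed
  finally show ?thesis .
qed

lemma Lnorm_quadratic_form_square_le:
  assumes sym: "\<And>i j. a i j = a j i"
  shows "(Lnorm M k (\<lambda>\<omega>. \<Sum>i\<in>{1..n}. \<Sum>j\<in>{1..n}. a i j * (\<xi> i \<omega> * \<xi> j \<omega> - (\<integral>\<omega>'. \<xi> i \<omega>' * \<xi> j \<omega>' \<partial>M))))\<^sup>2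
     \<le> 288 * (real k)\<^sup>2 * moment_root\<^sup>2 * (\<Sum>i\<in>{1..n}. \<Sum>j\<in>{1..n}. (a i j)\<^sup>2)"
proof -
  have row: "(a i i)\<^sup>2 + (\<Sum>j\<in>{1..<i}. (a i j)\<^sup>2) \<le> (\<Sum>j\<in>{1..n}. (a i j)\<^sup>2)" if "i \<in> {1..n}" for i
  proof -
    have "(a i i)\<^sup>2 + (\<Sum>j\<in>{1..<i}. (a i j)\<^sup>2) = (\<Sum>j\<in>insert i {1..<i}. (a i j)\<^sup>2)" by simp
    also have "\<dots> \<le> (\<Sum>j\<in>{1..n}. (a i j)\<^sup>2)" using that by (intro sum_mono2) auto
    finally show ?thesis .
  qed
  have "(Lnorm M k (\<lambda>\<omega>. \<Sum>i\<in>{1..n}. mart_diff a i \<omega>))\<^sup>2 \<le> 6 * real k * (\<Sum>i\<in>{1..n}. (Lnorm M k (mart_diff a i))\<^sup>2)"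
    using Lnorm_sum_square_le[OF two_le_k] finite_moment_mart_diff mart_diff_orthogonal by blast
  also have "\<dots> \<le> 6 * real k * (\<Sum>i\<in>{1..n}. 48 * real k * moment_root\<^sup>2 * (\<Sum>j\<in>{1..n}. (a i j)\<^sup>2))"
    using Lnorm_mart_diff_square_le row
    by (intro mult_left_mono sum_mono order_trans[OF Lnorm_mart_diff_square_le]) auto
  also have "\<dots> = 288 * (real k)\<^sup>2 * moment_root\<^sup>2 * (\<Sum>i\<in>{1..n}. \<Sum>j\<in>{1..n}. (a i j)\<^sup>2)"
    by (simp add: sum_distrib_left power2_eq_square mult_ac)
  finally show ?thesis unfolding quadratic_form_eq_sum_mart_diff[OF sym] .
qed

end

section \<open>Discrete orthogonality of the trigonometric system\<close>

lemma sin_pi_divide_nonzero: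
  fixes z :: int
  assumes "0 < \<bar>z\<bar>" "\<bar>z\<bar> < int n"
  shows "sin (pi * of_int z / real n) \<noteq> 0"
proof
  assume "sin (pi * of_int z / real n) = 0"
  then obtain m :: int where "pi * of_int z / real n = of_int m * pi" by (auto simp: sin_zero_iff_int2)
  then have "of_int z = of_int m * real n" using assms by (simp add: field_simps)
  then have z: "z = m * int n" by (metis of_int_eq_iff of_int_mult of_int_of_nat_eq)
  then have "m \<noteq> 0" using assms by auto
  then have "int n \<le> \<bar>m\<bar> * int n" using mult_right_mono[of 1 "\<bar>m\<bar>" "int n"] by simp
  moreover have "\<bar>z\<bar> = \<bar>m\<bar> * int n" by (simp add: z abs_mult)
  ultimately show False using assms by linarith
qed

lemma sum_cos_grid:
  fixes z :: int
  assumes "\<bar>z\<bar> < int n"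
  shows "(\<Sum>i=1..n. cos (2 * pi * of_int z * (real i / real n) + \<theta>)) = (if z = 0 then real n * cos \<theta> else 0)"
proof (cases "z = 0")
  case False
  define a where "a = 2 * pi * of_int z / real n"
  define f where "f i = sin ((real i - 1 / 2) * a + \<theta>)" for i :: nat
  have n: "0 < real n" using assms by simp
  have "sin (a / 2) \<noteq> 0"
    using sin_pi_divide_nonzero[of z n] assms False by (simp add: a_def)
  \<comment> \<open>\<open>2 sin (a/2) cos (i a + \<theta>)\<close> telescopes, and \<open>f\<close> has period \<open>n\<close> because \<open>n a \<in> 2 \<pi> \<int>\<close>\<close>
  moreover have "2 * sin (a / 2) * (\<Sum>i=1..n. cos (2 * pi * of_int z * (real i / real n) + \<theta>))
      = (\<Sum>i=1..n. f (Suc i) - f i)"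
  proof -
    have "2 * sin (a / 2) * cos (2 * pi * of_int z * (real i / real n) + \<theta>) = f (Suc i) - f i" for i
    proof -
      have "2 * pi * of_int z * (real i / real n) = real i * a" by (simp add: a_def)
      moreover have "f (Suc i) = sin ((real i * a + \<theta>) + a / 2)" "f i = sin ((real i * a + \<theta>) - a / 2)"
        by (simp_all add: f_def algebra_simps)
      ultimately show ?thesis by (simp add: sin_add sin_diff)
    qed
    then show ?thesis by (simp add: sum_distrib_left)
  qed
  moreover have "(\<Sum>i=1..n. f (Suc i) - f i) = 0"
  proof -
    have "(real (Suc n) - 1 / 2) * a + \<theta> = a / 2 + \<theta> + 2 * pi * of_int z"
      using n by (simp add: a_def field_simps)
    then have "f (Suc n) = sin (a / 2 + \<theta> + 2 * pi * of_int z)" unfolding f_def by (rule arg_cong[where f = sin])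
    also have "\<dots> = f 1" by (simp add: f_def sin_add)
    finally show ?thesis using assms by (simp add: sum_Suc_diff)
  qed
  ultimately show ?thesis using False by simp
qed simp

lemma trig_phi_eq_cos:
  assumes "2 \<le> l"
  shows "trig_phi l x = sqrt 2 * cos (2 * pi * real (l div 2) * x - real (l mod 2) * pi / 2)"
proof (cases "even l")
  case True
  then show ?thesis using assms by (simp add: trig_phi_def)
next
  case False
  then have "l mod 2 = 1" "l \<noteq> 1" using assms by (simp_all add: odd_iff_mod_2_eq_one)
  then show ?thesis using False by (simp add: trig_phi_def cos_diff)
qed

lemma trig_phi_mult_trig_phi:
  assumes "2 \<le> l" "2 \<le> l'"
  defines "p \<equiv> l div 2" and "q \<equiv> l' div 2" and "e \<equiv> real (l mod 2)" and "e' \<equiv> real (l' mod 2)"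
  shows "trig_phi l x * trig_phi l' x
      = cos (2 * pi * of_int (int p - int q) * x + - ((e - e') * pi / 2))
        + cos (2 * pi * of_int (int p + int q) * x + - ((e + e') * pi / 2))"
proof -
  define A where "A = 2 * pi * real p * x - e * pi / 2"
  define B where "B = 2 * pi * real q * x - e' * pi / 2"
  have "trig_phi l x * trig_phi l' x = 2 * (cos A * cos B)"
    using assms by (simp add: trig_phi_eq_cos A_def B_def)
  also have "\<dots> = cos (A - B) + cos (A + B)" by (simp add: cos_times_cos)
  also have "A - B = 2 * pi * of_int (int p - int q) * x + - ((e - e') * pi / 2)"
    by (simp add: A_def B_def field_simps)
  also have "A + B = 2 * pi * of_int (int p + int q) * x + - ((e + e') * pi / 2)"
    by (simp add: A_def B_def field_simps)
  finally show ?thesis .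
qed

lemma cos_parity_difference:
  fixes l l' :: nat
  assumes "l div 2 = l' div 2"
  shows "cos (- ((real (l mod 2) - real (l' mod 2)) * pi / 2)) = (if l = l' then 1 else 0)"
proof -
  have "l mod 2 = 0 \<or> l mod 2 = 1" "l' mod 2 = 0 \<or> l' mod 2 = 1"
    using less_2_cases[of "l mod 2"] less_2_cases[of "l' mod 2"] by simp_all
  then have "cos (- ((real (l mod 2) - real (l' mod 2)) * pi / 2)) = (if l mod 2 = l' mod 2 then 1 else 0)"
    by (elim disjE) simp_all
  moreover have "l = l' \<longleftrightarrow> l mod 2 = l' mod 2"
    using mult_div_mod_eq[of 2 l] mult_div_mod_eq[of 2 l'] assms by (intro iffI) linarith+
  ultimately show ?thesis by simp
qed

lemma sum_trig_phi_mult_trig_phi: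
  assumes l: "2 \<le> l" and l': "2 \<le> l'" and n: "l div 2 + l' div 2 < n"
  shows "(\<Sum>i=1..n. trig_phi l (real i / real n) * trig_phi l' (real i / real n)) = (if l = l' then real n else 0)"
proof -
  define p where "p = l div 2"
  define q where "q = l' div 2"
  define e where "e = real (l mod 2)"
  define e' where "e' = real (l' mod 2)"
  have "1 \<le> p" "1 \<le> q" "p + q < n" using l l' n by (simp_all add: p_def q_def)
  then have "\<bar>int p - int q\<bar> < int n" "int p + int q \<noteq> 0" "\<bar>int p + int q\<bar> < int n" by linarith+
  note grid = sum_cos_grid[OF this(1), of "- ((e - e') * pi / 2)"]
    sum_cos_grid[OF this(3), of "- ((e + e') * pi / 2)"]
  have "(\<Sum>i=1..n. trig_phi l (real i / real n) * trig_phi l' (real i / real n))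
      = (if p = q then real n * cos (- ((e - e') * pi / 2)) else 0)"
    unfolding trig_phi_mult_trig_phi[OF l l'] p_def[symmetric] q_def[symmetric] e_def[symmetric]
      e'_def[symmetric] sum.distrib grid
    using \<open>int p + int q \<noteq> 0\<close> by simp
  also have "\<dots> = (if l = l' then real n else 0)"
    using cos_parity_difference[of l l'] by (auto simp: p_def q_def e_def e'_def)
  finally show ?thesis .
qed

lemma sum_square_sum_products_swap:
  fixes u :: "'c \<Rightarrow> 'b \<Rightarrow> real"
  shows "(\<Sum>i\<in>I. \<Sum>j\<in>I. (\<Sum>l\<in>L. u l i * u l j)\<^sup>2) = (\<Sum>l\<in>L. \<Sum>l'\<in>L. (\<Sum>i\<in>I. u l i * u l' i)\<^sup>2)"
proof -
  have "(\<Sum>i\<in>I. \<Sum>j\<in>I. (\<Sum>l\<in>L. u l i * u l j)\<^sup>2) = (\<Sum>i\<in>I. \<Sum>j\<in>I. \<Sum>l\<in>L. \<Sum>l'\<in>L. u l i * u l j * (u l' i * u l' j))"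
    by (simp add: power2_eq_square sum_product)
  also have "\<dots> = (\<Sum>l\<in>L. \<Sum>l'\<in>L. \<Sum>i\<in>I. \<Sum>j\<in>I. u l i * u l j * (u l' i * u l' j))"
    by (subst sum.swap, subst (2) sum.swap, subst (3) sum.swap, subst (2) sum.swap) (rule refl)
  also have "\<dots> = (\<Sum>l\<in>L. \<Sum>l'\<in>L. (\<Sum>i\<in>I. u l i * u l' i)\<^sup>2)"
    by (simp add: power2_eq_square sum_product mult_ac)
  finally show ?thesis .
qed

lemma coef_a_eq:
  "coef_a n N i j = (\<Sum>l\<in>{N+1..2*N}. trig_phi l (real i / real n) * trig_phi l (real j / real n))"
proof -
  have "{1..2*N} = {1..N} \<union> {N+1..2*N}" "{1..N} \<inter> {N+1..2*N} = {}" by auto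
  then show ?thesis by (simp add: coef_a_def dirichlet_kernel_def sum.union_disjoint)
qed

lemma coef_a_sym: "coef_a n N i j = coef_a n N j i"
  by (simp add: coef_a_eq mult_ac)

lemma sum_coef_a_square:
  assumes "1 \<le> N" "N \<le> n div 3"
  shows "(\<Sum>i\<in>{1..n}. \<Sum>j\<in>{1..n}. (coef_a n N i j)\<^sup>2) = real N * (real n)\<^sup>2"
proof -
  define u where "u l i = trig_phi l (real i / real n)" for l i
  have "(\<Sum>i\<in>{1..n}. \<Sum>j\<in>{1..n}. (coef_a n N i j)\<^sup>2)
      = (\<Sum>l\<in>{N+1..2*N}. \<Sum>l'\<in>{N+1..2*N}. (\<Sum>i\<in>{1..n}. u l i * u l' i)\<^sup>2)"
    unfolding coef_a_eq u_def[symmetric] by (rule sum_square_sum_products_swap)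
  also have "\<dots> = (\<Sum>l\<in>{N+1..2*N}. \<Sum>l'\<in>{N+1..2*N}. (if l = l' then (real n)\<^sup>2 else 0))"
  proof (intro sum.cong refl)
    fix l l' assume "l \<in> {N+1..2*N}" "l' \<in> {N+1..2*N}"
    moreover have "2 * N < n" using assms by linarith
    ultimately show "(\<Sum>i\<in>{1..n}. u l i * u l' i)\<^sup>2 = (if l = l' then (real n)\<^sup>2 else 0)"
      unfolding u_def using assms by (subst sum_trig_phi_mult_trig_phi) auto
  qed
  also have "\<dots> = real N * (real n)\<^sup>2" by simp
  finally show ?thesis .
qed

theorem lemma4:
  "\<exists>C::real. \<forall>(M::'a measure) (\<xi>::nat \<Rightarrow> 'a \<Rightarrow> real) (k::nat) (n::nat) (N::nat).
     prob_space M \<longrightarrow>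
     (\<forall>i. \<xi> i \<in> borel_measurable M) \<longrightarrow>
     prob_space.indep_vars M (\<lambda>_. borel) \<xi> UNIV \<longrightarrow>
     (\<forall>i. distr M borel (\<xi> i) = distr M borel (\<xi> 1)) \<longrightarrow>
     integrable M (\<xi> 1) \<longrightarrow>
     (\<integral>\<omega>. \<xi> 1 \<omega> \<partial>M) = 0 \<longrightarrow>
     2 \<le> k \<longrightarrow>
     integrable M (\<lambda>\<omega>. \<xi> 1 \<omega> ^ (2 * k)) \<longrightarrow>
     1 \<le> N \<longrightarrow> N \<le> n div 3 \<longrightarrow>
     Lnorm M k (Psi2 M \<xi> n N)
       \<le> C * real k * (\<integral>\<omega>. \<xi> 1 \<omega> ^ (2 * k) \<partial>M) powr (1 / real k) * sqrt (real N) / real n"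
proof (intro exI[of _ 17] allI impI)
  fix M :: "'a measure" and \<xi> :: "nat \<Rightarrow> 'a \<Rightarrow> real" and k n N :: nat
  assume "prob_space M" "\<forall>i. \<xi> i \<in> borel_measurable M" "prob_space.indep_vars M (\<lambda>_. borel) \<xi> UNIV"
    "\<forall>i. distr M borel (\<xi> i) = distr M borel (\<xi> 1)" "integrable M (\<xi> 1)" "(\<integral>\<omega>. \<xi> 1 \<omega> \<partial>M) = 0"
    "2 \<le> k" "integrable M (\<lambda>\<omega>. \<xi> 1 \<omega> ^ (2 * k))" and N: "1 \<le> N" "N \<le> n div 3"
  \<comment> \<open>the hypothesis \<open>integrable M (\<xi> 1)\<close> is implied by the finite \<open>2 k\<close>-th moment\<close>
  then interpret centred_iid M \<xi> k by (simp add: centred_iid_def centred_iid_axioms_def)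
  define Q where "Q \<omega> = (\<Sum>i\<in>{1..n}. \<Sum>j\<in>{1..n}.
    coef_a n N i j * (\<xi> i \<omega> * \<xi> j \<omega> - (\<integral>\<omega>'. \<xi> i \<omega>' * \<xi> j \<omega>' \<partial>M)))" for \<omega>
  have "(Lnorm M k Q)\<^sup>2 \<le> 288 * (real k)\<^sup>2 * moment_root\<^sup>2 * (real N * (real n)\<^sup>2)"
    using Lnorm_quadratic_form_square_le[of "coef_a n N" n] coef_a_sym sum_coef_a_square[OF N]
    by (simp add: Q_def[abs_def])
  also have "\<dots> \<le> (17 * real k * moment_root * sqrt (real N) * real n)\<^sup>2"
    by (simp add: power_mult_distrib)
  finally have "Lnorm M k Q \<le> 17 * real k * moment_root * sqrt (real N) * real n"
    by (rule power2_le_imp_le) (simp add: moment_root_nonneg)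
  have "Lnorm M k (Psi2 M \<xi> n N) = Lnorm M k Q / (real n)\<^sup>2"
    using Lnorm_cmult[of k M "1 / (real n)\<^sup>2" Q] two_le_k by (simp add: Psi2_def[abs_def] Q_def)
  also have "\<dots> \<le> 17 * real k * moment_root * sqrt (real N) * real n / (real n)\<^sup>2"
    by (rule divide_right_mono) (fact, simp)
  also have "\<dots> = 17 * real k * moment_root * sqrt (real N) / real n"
    by (simp add: power2_eq_square)
  finally show "Lnorm M k (Psi2 M \<xi> n N)
      \<le> 17 * real k * (\<integral>\<omega>. \<xi> 1 \<omega> ^ (2 * k) \<partial>M) powr (1 / real k) * sqrt (real N) / real n"
    by (simp add: moment_root_def)
qed

end
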